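(* Let $M\ge1$, $J_M=\begin{pmatrix}0&I_M\\-I_M&0\end{pmatrix}$. Let $A'$ be the unital $*$-subalgebra of $\mathrm{Pol}(U_{2M}^+)$ generated by the products $u_{jk}^*u_{\ell m}$, $1\le j,k,\ell,m\le 2M$, and $B'$ the unital $*$-subalgebra of $\mathrm{Pol}(O_{J_M}^+)$ generated by the products $u_{jk}^*u_{\ell m}$, $1\le j,k,\ell,m\le 2M$. Then there is a unique CQG algebra isomorphism $A'\to B'$ with $u_{jk}^*u_{\ell m}\mapsto u_{jk}^*u_{\ell m}$ for all $j,k,\ell,m$.
   Context: $\mathrm{Pol}(U_{2M}^+)$ is the universal unital $*$-algebra generated by $u_{jk}$, $1\le j,k\le 2M$, such that $U=(u_{jk})$ and $\overline{U}=(u_{jk}^* )$ are unitary. $\mathrm{Pol}(O_{J_M}^+)$ is the universal unital $*$-algebra generated by $u_{jk}$, $1\le j,k\le 2M$, such that $U=(u_{jk})$ is unitary and $U=J_M\overline{U}J_M^{-1}$. Both are CQG algebras (Hopf $*$-algebras) with $\Delta(u_{jk})=\sum_\ell u_{j\ell}\otimes u_{\ell k}$, and $A'$, $B'$ are Hopf $*$-subalgebras. *)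

theory Defs
  imports Complex_Main
begin

text \<open>
  Letters: (j,k,False) stands for u_jk, (j,k,True) for u_jk^*.
  The free unital *-algebra on the letters with 1 <= j,k <= 2M is modelled as the
  finitely supported complex-valued functions on words; the universal algebras are
  quotients by the two-sided *-ideal generated by the defining relations, and
  elements of the quotient are equivalence classes (sets of representatives).
\<close>

type_synonym letter = "nat \<times> nat \<times> bool"
type_synonym word = "letter list"
type_synonym el = "word \<Rightarrow> complex"
type_synonym tel = "word \<times> word \<Rightarrow> complex"

definition letters :: "nat \<Rightarrow> letter set" where
  "letters M = {(j,k,b). 1 \<le> j \<and> j \<le> 2*M \<and> 1 \<le> k \<and> k \<le> 2*M}"

definition Fr :: "nat \<Rightarrow> el set" where
  "Fr M = {f. finite {w. f w \<noteq> 0} \<and> (\<forall>w. f w \<noteq> 0 \<longrightarrow> set w \<subseteq> letters M)}"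

definition fzero :: el where "fzero = (\<lambda>w. 0)"
definition fone :: el where "fone = (\<lambda>w. if w = [] then 1 else 0)"
definition fgen :: "letter \<Rightarrow> el" where "fgen x = (\<lambda>w. if w = [x] then 1 else 0)"
definition fadd :: "el \<Rightarrow> el \<Rightarrow> el" where "fadd f g = (\<lambda>w. f w + g w)"
definition fsub :: "el \<Rightarrow> el \<Rightarrow> el" where "fsub f g = (\<lambda>w. f w - g w)"
definition fscale :: "complex \<Rightarrow> el \<Rightarrow> el" where "fscale c f = (\<lambda>w. c * f w)"
definition fmul :: "el \<Rightarrow> el \<Rightarrow> el" where
  "fmul f g = (\<lambda>w. \<Sum>i\<le>length w. f (take i w) * g (drop i w))"
definition flipl :: "letter \<Rightarrow> letter" where "flipl x = (case x of (j,k,b) \<Rightarrow> (j,k,\<not> b))"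
definition fstar :: "el \<Rightarrow> el" where "fstar f = (\<lambda>w. cnj (f (rev (map flipl w))))"
definition fsumset :: "'i set \<Rightarrow> ('i \<Rightarrow> el) \<Rightarrow> el" where
  "fsumset S F = (\<lambda>w. \<Sum>i\<in>S. F i w)"

definition u :: "nat \<Rightarrow> nat \<Rightarrow> el" where "u j k = fgen (j,k,False)"
definition us :: "nat \<Rightarrow> nat \<Rightarrow> el" where "us j k = fgen (j,k,True)"

definition delta :: "nat \<Rightarrow> nat \<Rightarrow> complex" where "delta j k = (if j = k then 1 else 0)"

text \<open>J_M = [[0, I_M], [-I_M, 0]] with indices 1..2M, and its inverse (= transpose).\<close>
definition Jm :: "nat \<Rightarrow> nat \<Rightarrow> nat \<Rightarrow> complex" where
  "Jm M a b = (if 1 \<le> a \<and> a \<le> M \<and> b = a + M then 1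
               else if M < a \<and> a \<le> 2*M \<and> a = b + M then -1 else 0)"
definition Jinv :: "nat \<Rightarrow> nat \<Rightarrow> nat \<Rightarrow> complex" where
  "Jinv M a b = Jm M b a"

definition idx :: "nat \<Rightarrow> nat set" where "idx M = {1..2*M}"

text \<open>Relations: U U^* = 1, U^* U = 1 (entrywise).\<close>
definition relUnitary :: "nat \<Rightarrow> el set" where
  "relUnitary M =
     {fsub (fsumset (idx M) (\<lambda>l. fmul (u j l) (us k l))) (fscale (delta j k) fone) | j k. j \<in> idx M \<and> k \<in> idx M}
   \<union> {fsub (fsumset (idx M) (\<lambda>l. fmul (us l j) (u l k))) (fscale (delta j k) fone) | j k. j \<in> idx M \<and> k \<in> idx M}"

text \<open>Relations: Ubar Ubar^* = 1, Ubar^* Ubar = 1 where Ubar = (u_jk^*).\<close>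
definition relUbarUnitary :: "nat \<Rightarrow> el set" where
  "relUbarUnitary M =
     {fsub (fsumset (idx M) (\<lambda>l. fmul (us j l) (u k l))) (fscale (delta j k) fone) | j k. j \<in> idx M \<and> k \<in> idx M}
   \<union> {fsub (fsumset (idx M) (\<lambda>l. fmul (u l j) (us l k))) (fscale (delta j k) fone) | j k. j \<in> idx M \<and> k \<in> idx M}"

text \<open>Relations: U = J Ubar J^{-1}.\<close>
definition relJ :: "nat \<Rightarrow> el set" where
  "relJ M = {fsub (u j k) (fsumset (idx M \<times> idx M) (\<lambda>(a,b). fscale (Jm M j a * Jinv M b k) (us a b)))
             | j k. j \<in> idx M \<and> k \<in> idx M}"

definition relU :: "nat \<Rightarrow> el set" where "relU M = relUnitary M \<union> relUbarUnitary M"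
definition relO :: "nat \<Rightarrow> el set" where "relO M = relUnitary M \<union> relJ M"

inductive_set starIdeal :: "nat \<Rightarrow> el set \<Rightarrow> el set" for M R where
  gen: "r \<in> R \<Longrightarrow> r \<in> starIdeal M R"
| zero: "fzero \<in> starIdeal M R"
| add: "a \<in> starIdeal M R \<Longrightarrow> b \<in> starIdeal M R \<Longrightarrow> fadd a b \<in> starIdeal M R"
| scale: "a \<in> starIdeal M R \<Longrightarrow> fscale c a \<in> starIdeal M R"
| lmul: "x \<in> Fr M \<Longrightarrow> a \<in> starIdeal M R \<Longrightarrow> fmul x a \<in> starIdeal M R"
| rmul: "a \<in> starIdeal M R \<Longrightarrow> x \<in> Fr M \<Longrightarrow> fmul a x \<in> starIdeal M R"
| star: "a \<in> starIdeal M R \<Longrightarrow> fstar a \<in> starIdeal M R"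

definition IU :: "nat \<Rightarrow> el set" where "IU M = starIdeal M (relU M)"
definition IO :: "nat \<Rightarrow> el set" where "IO M = starIdeal M (relO M)"

definition cls :: "nat \<Rightarrow> el set \<Rightarrow> el \<Rightarrow> el set" where
  "cls M I p = {q \<in> Fr M. fsub p q \<in> I}"

definition Pol :: "nat \<Rightarrow> el set \<Rightarrow> el set set" where "Pol M I = cls M I ` Fr M"

definition qone :: "nat \<Rightarrow> el set \<Rightarrow> el set" where "qone M I = cls M I fone"
definition qadd :: "nat \<Rightarrow> el set \<Rightarrow> el set \<Rightarrow> el set \<Rightarrow> el set" where
  "qadd M I X Y = (\<Union>p\<in>X. \<Union>q\<in>Y. cls M I (fadd p q))"
definition qscale :: "nat \<Rightarrow> el set \<Rightarrow> complex \<Rightarrow> el set \<Rightarrow> el set" where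
  "qscale M I c X = (\<Union>p\<in>X. cls M I (fscale c p))"
definition qmul :: "nat \<Rightarrow> el set \<Rightarrow> el set \<Rightarrow> el set \<Rightarrow> el set" where
  "qmul M I X Y = (\<Union>p\<in>X. \<Union>q\<in>Y. cls M I (fmul p q))"
definition qstar :: "nat \<Rightarrow> el set \<Rightarrow> el set \<Rightarrow> el set" where
  "qstar M I X = (\<Union>p\<in>X. cls M I (fstar p))"

inductive_set subalgS :: "nat \<Rightarrow> el set \<Rightarrow> el set set" for M I where
  one: "qone M I \<in> subalgS M I"
| gen: "j \<in> idx M \<Longrightarrow> k \<in> idx M \<Longrightarrow> l \<in> idx M \<Longrightarrow> m \<in> idx M \<Longrightarrow>
        cls M I (fmul (us j k) (u l m)) \<in> subalgS M I"
| add: "X \<in> subalgS M I \<Longrightarrow> Y \<in> subalgS M I \<Longrightarrow> qadd M I X Y \<in> subalgS M I"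
| scale: "X \<in> subalgS M I \<Longrightarrow> qscale M I c X \<in> subalgS M I"
| mul: "X \<in> subalgS M I \<Longrightarrow> Y \<in> subalgS M I \<Longrightarrow> qmul M I X Y \<in> subalgS M I"
| star: "X \<in> subalgS M I \<Longrightarrow> qstar M I X \<in> subalgS M I"

definition A' :: "nat \<Rightarrow> el set set" where "A' M = subalgS M (IU M)"
definition B' :: "nat \<Rightarrow> el set set" where "B' M = subalgS M (IO M)"

text \<open>Algebraic tensor square Fr M \<otimes> Fr M, modelled as finitely supported functions
  on pairs of words; (Fr M / I) \<otimes> (Fr M / I) = (Fr M \<otimes> Fr M)/(I \<otimes> Fr M + Fr M \<otimes> I).\<close>
definition FF :: "nat \<Rightarrow> tel set" where
  "FF M = {t. finite {vw. t vw \<noteq> 0} \<and>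
              (\<forall>v w. t (v,w) \<noteq> 0 \<longrightarrow> set v \<subseteq> letters M \<and> set w \<subseteq> letters M)}"
definition ftens :: "el \<Rightarrow> el \<Rightarrow> tel" where "ftens p q = (\<lambda>(v,w). p v * q w)"
definition tadd :: "tel \<Rightarrow> tel \<Rightarrow> tel" where "tadd s t = (\<lambda>x. s x + t x)"
definition tsub :: "tel \<Rightarrow> tel \<Rightarrow> tel" where "tsub s t = (\<lambda>x. s x - t x)"
definition tscale :: "complex \<Rightarrow> tel \<Rightarrow> tel" where "tscale c t = (\<lambda>x. c * t x)"
definition tmul :: "tel \<Rightarrow> tel \<Rightarrow> tel" where
  "tmul s t = (\<lambda>(v,w). \<Sum>i\<le>length v. \<Sum>k\<le>length w.
                 s (take i v, take k w) * t (drop i v, drop k w))"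
definition tsumset :: "'i set \<Rightarrow> ('i \<Rightarrow> tel) \<Rightarrow> tel" where
  "tsumset S F = (\<lambda>x. \<Sum>i\<in>S. F i x)"
definition tlist :: "(el \<times> el) list \<Rightarrow> tel" where
  "tlist ps = (\<lambda>x. \<Sum>pq\<leftarrow>ps. ftens (fst pq) (snd pq) x)"

inductive_set tIdeal :: "nat \<Rightarrow> el set \<Rightarrow> tel set" for M I where
  zero: "(\<lambda>x. 0) \<in> tIdeal M I"
| left: "a \<in> I \<Longrightarrow> q \<in> Fr M \<Longrightarrow> ftens a q \<in> tIdeal M I"
| right: "p \<in> Fr M \<Longrightarrow> a \<in> I \<Longrightarrow> ftens p a \<in> tIdeal M I"
| add: "s \<in> tIdeal M I \<Longrightarrow> t \<in> tIdeal M I \<Longrightarrow> tadd s t \<in> tIdeal M I"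
| scale: "s \<in> tIdeal M I \<Longrightarrow> tscale c s \<in> tIdeal M I"

definition tcls :: "nat \<Rightarrow> el set \<Rightarrow> tel \<Rightarrow> tel set" where
  "tcls M I t = {s \<in> FF M. tsub t s \<in> tIdeal M I}"

definition dletter :: "nat \<Rightarrow> letter \<Rightarrow> tel" where
  "dletter M x = (case x of (j,k,b) \<Rightarrow> tsumset (idx M) (\<lambda>l. ftens (fgen (j,l,b)) (fgen (l,k,b))))"

primrec dword :: "nat \<Rightarrow> word \<Rightarrow> tel" where
  "dword M [] = ftens fone fone"
| "dword M (x # w) = tmul (dletter M x) (dword M w)"

definition fDelta :: "nat \<Rightarrow> el \<Rightarrow> tel" where
  "fDelta M f = (\<lambda>x. \<Sum>w\<in>{w. f w \<noteq> 0}. f w * dword M w x)"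

definition qDelta :: "nat \<Rightarrow> el set \<Rightarrow> el set \<Rightarrow> tel set" where
  "qDelta M I X = (\<Union>p\<in>X. tcls M I (fDelta M p))"

text \<open>CQG algebra isomorphism phi : A \<rightarrow> B (A \<subseteq> Fr M / I1, B \<subseteq> Fr M / I2):
  a bijective unital *-algebra homomorphism intertwining the comultiplications,
  i.e. (phi \<otimes> phi) o Delta = Delta o phi on A (with Delta(A) \<subseteq> A \<otimes> A).\<close>
definition cqg_iso :: "nat \<Rightarrow> el set \<Rightarrow> el set set \<Rightarrow> el set \<Rightarrow> el set set \<Rightarrow> (el set \<Rightarrow> el set) \<Rightarrow> bool" where
  "cqg_iso M I1 A I2 B \<phi> \<longleftrightarrow>
     bij_betw \<phi> A B
   \<and> \<phi> (qone M I1) = qone M I2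
   \<and> (\<forall>X\<in>A. \<forall>Y\<in>A. \<phi> (qadd M I1 X Y) = qadd M I2 (\<phi> X) (\<phi> Y))
   \<and> (\<forall>X\<in>A. \<forall>c. \<phi> (qscale M I1 c X) = qscale M I2 c (\<phi> X))
   \<and> (\<forall>X\<in>A. \<forall>Y\<in>A. \<phi> (qmul M I1 X Y) = qmul M I2 (\<phi> X) (\<phi> Y))
   \<and> (\<forall>X\<in>A. \<phi> (qstar M I1 X) = qstar M I2 (\<phi> X))
   \<and> (\<forall>X\<in>A. \<exists>ps ps' :: (el \<times> el) list.
          length ps' = length ps
        \<and> (\<forall>i<length ps. cls M I1 (fst (ps!i)) \<in> A \<and> cls M I1 (snd (ps!i)) \<in> A
              \<and> cls M I2 (fst (ps'!i)) = \<phi> (cls M I1 (fst (ps!i)))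
              \<and> cls M I2 (snd (ps'!i)) = \<phi> (cls M I1 (snd (ps!i))))
        \<and> qDelta M I1 X = tcls M I1 (tlist ps)
        \<and> qDelta M I2 (\<phi> X) = tcls M I2 (tlist ps'))"

definition gen_values :: "nat \<Rightarrow> (el set \<Rightarrow> el set) \<Rightarrow> bool" where
  "gen_values M \<phi> \<longleftrightarrow>
     (\<forall>j\<in>idx M. \<forall>k\<in>idx M. \<forall>l\<in>idx M. \<forall>m\<in>idx M.
        \<phi> (cls M (IU M) (fmul (us j k) (u l m))) = cls M (IO M) (fmul (us j k) (u l m)))"

end

theory Submission
  imports Defs
begin

(*
  Since U = J Ubar J^-1, the matrix Ubar is unitary as soon as U is, so every defining relation
  of Pol(U_2M^+) holds in Pol(O_J^+): the identity of the free *-algebra descends to a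
  *-homomorphism Pol(U_2M^+) -> Pol(O_J^+) which respects the comultiplications and maps A'
  onto B'. Uniqueness is clear since A' is generated by the u_jk^* u_lm.

  Injectivity on A' comes from a 2x2 matrix trick. Write J_M as J_ja = e_j [a = s j] with a sign e
  and an involution s of {1..2M}. The assignment
     u_jk |-> [[0, u_jk], [e_j e_k u_(sj)(sk)^*, 0]]
  extends to a *-homomorphism pi from the free *-algebra into 2x2 matrices over it. It kills the
  relation U = J Ubar J^-1 and sends the unitarity of U to unitarity relations of U and of Ubar,
  so pi maps the ideal of O_J^+ into matrices over the ideal of U_2M^+. On the even part, generated
  by the u_jk^* u_lm, pi(p) is diagonal with lower right entry p. Hence an even p in the ideal of
  O_J^+ already lies in the ideal of U_2M^+.
*)

definition conv :: "('m \<Rightarrow> 'm \<Rightarrow> 'm) \<Rightarrow> ('m \<Rightarrow> complex) \<Rightarrow> ('m \<Rightarrow> complex) \<Rightarrow> 'm \<Rightarrow> complex" where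
  "conv app f g w = (\<Sum>p\<in>{p. app (fst p) (snd p) = w}. f (fst p) * g (snd p))"

lemma conv_assoc:
  assumes assoc: "\<And>a b c. app (app a b) c = app a (app b c)"
    and fin: "\<And>w. finite {p. app (fst p) (snd p) = w}"
  shows "conv app (conv app f g) h = conv app f (conv app g h)"
proof
  fix w
  let ?S = "{p. app (fst p) (snd p) = w}"
  have "conv app (conv app f g) h w = (\<Sum>p\<in>?S. \<Sum>q\<in>{q. app (fst q) (snd q) = fst p}. f (fst q) * g (snd q) * h (snd p))"
    unfolding conv_def by (simp add: sum_distrib_right)
  also have "\<dots> = (\<Sum>pq\<in>(SIGMA p:?S. {q. app (fst q) (snd q) = fst p}). f (fst (snd pq)) * g (snd (snd pq)) * h (snd (fst pq)))"
    by (subst sum.Sigma) (auto simp: fin case_prod_beta)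
  also have "\<dots> = (\<Sum>pq\<in>(SIGMA p:?S. {q. app (fst q) (snd q) = snd p}). f (fst (fst pq)) * (g (fst (snd pq)) * h (snd (snd pq))))"
    by (rule sum.reindex_bij_witness[where i = "\<lambda>((a,y),(b,c)). ((app a b, c),(a,b))"
          and j = "\<lambda>((x,c),(a,b)). ((a, app b c),(b,c))"]) (auto simp: assoc)
  also have "\<dots> = conv app f (conv app g h) w"
    unfolding conv_def sum_distrib_left by (subst sum.Sigma) (auto simp: fin split_beta)
  finally show "conv app (conv app f g) h w = conv app f (conv app g h) w" .
qed

lemma conv_reflect:
  assumes anti: "\<And>a b. \<rho> (app a b) = app (\<rho> b) (\<rho> a)" and invol: "\<And>a. \<rho> (\<rho> a) = a"
  shows "(\<lambda>w. cnj (conv app f g (\<rho> w))) = conv app (\<lambda>w. cnj (g (\<rho> w))) (\<lambda>w. cnj (f (\<rho> w)))"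
proof
  fix w
  show "cnj (conv app f g (\<rho> w)) = conv app (\<lambda>w. cnj (g (\<rho> w))) (\<lambda>w. cnj (f (\<rho> w))) w"
    unfolding conv_def cnj_sum
    by (rule sum.reindex_bij_witness[where i = "\<lambda>(a,b). (\<rho> b, \<rho> a)" and j = "\<lambda>(a,b). (\<rho> b, \<rho> a)"])
       (auto simp: invol anti[symmetric])
qed

lemma conv_unit_left:
  assumes unit: "\<And>p. app e p = p" and fin: "finite {p. app (fst p) (snd p) = w}"
  shows "conv app (\<lambda>x. if x = e then 1 else 0) f w = f w"
proof -
  have "conv app (\<lambda>x. if x = e then 1 else 0) f w = (\<Sum>p\<in>{p. app (fst p) (snd p) = w}. if p = (e, w) then f w else 0)"
    unfolding conv_def by (rule sum.cong) (auto simp: unit)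
  also have "\<dots> = f w" using fin by (simp add: unit)
  finally show ?thesis .
qed

lemma conv_unit_right:
  assumes unit: "\<And>p. app p e = p" and fin: "finite {p. app (fst p) (snd p) = w}"
  shows "conv app f (\<lambda>x. if x = e then 1 else 0) w = f w"
proof -
  have "conv app f (\<lambda>x. if x = e then 1 else 0) w = (\<Sum>p\<in>{p. app (fst p) (snd p) = w}. if p = (w, e) then f w else 0)"
    unfolding conv_def by (rule sum.cong) (auto simp: unit)
  also have "\<dots> = f w" using fin by (simp add: unit)
  finally show ?thesis .
qed

lemma splits_eq_image: "{p. fst p @ snd p = w} = (\<lambda>i. (take i w, drop i w)) ` {..length w}"
  by (auto simp: append_eq_conv_conj image_iff intro!: exI[where x="length (fst _)"])
     (metis append_eq_conv_conj atMost_iff le_add1 length_append prod.collapse)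

lemma finite_splits: "finite {p. fst p @ snd p = (w::'a list)}"
  by (simp add: splits_eq_image)

lemma fmul_conv: "fmul f g = conv (@) f g"
proof
  fix w
  show "fmul f g w = conv (@) f g w"
    unfolding fmul_def conv_def
    by (rule sum.reindex_bij_witness[where i = "\<lambda>p. length (fst p)" and j = "\<lambda>i. (take i w, drop i w)"])
       (auto; metis append_eq_conv_conj le_add1 length_append prod.collapse)+
qed

definition pair_append :: "word \<times> word \<Rightarrow> word \<times> word \<Rightarrow> word \<times> word" where
  "pair_append a b = (fst a @ fst b, snd a @ snd b)"

lemma pair_append_assoc: "pair_append (pair_append a b) c = pair_append a (pair_append b c)"
  by (simp add: pair_append_def)

lemma finite_pair_splits: "finite {p. pair_append (fst p) (snd p) = w}"
proof (rule finite_subset)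
  let ?regroup = "\<lambda>(a,b). ((fst a, fst b),(snd a, snd b))"
  show "{p. pair_append (fst p) (snd p) = w} \<subseteq>
        ?regroup ` ({p. fst p @ snd p = fst w} \<times> {p. fst p @ snd p = snd w})"
    by (auto simp: pair_append_def image_iff)
  show "finite (?regroup ` ({p. fst p @ snd p = fst w} \<times> {p. fst p @ snd p = snd w}))"
    using finite_splits by blast
qed

lemma tmul_conv: "tmul s t = conv pair_append s t"
proof
  fix x
  obtain v w :: word where x: "x = (v,w)" by (cases x)
  have "tmul s t (v,w) = (\<Sum>ik\<in>{..length v} \<times> {..length w}.
          s (take (fst ik) v, take (snd ik) w) * t (drop (fst ik) v, drop (snd ik) w))"
    unfolding tmul_def by (simp add: sum.cartesian_product split_beta)
  also have "\<dots> = conv pair_append s t (v,w)"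
    unfolding conv_def
    by (rule sum.reindex_bij_witness[where i = "\<lambda>P. (length (fst (fst P)), length (snd (fst P)))"
          and j = "\<lambda>(i,k). ((take i v, take k w),(drop i v, drop k w))"])
       (auto simp: pair_append_def; metis append_eq_conv_conj le_add1 length_append prod.collapse)+
  finally show "tmul s t x = conv pair_append s t x" by (simp add: x)
qed

lemma fmul_assoc: "fmul (fmul f g) h = fmul f (fmul g h)"
  unfolding fmul_conv by (rule conv_assoc) (auto simp: finite_splits)

lemma tmul_assoc: "tmul (tmul f g) h = tmul f (tmul g h)"
  unfolding tmul_conv by (rule conv_assoc) (auto simp: finite_pair_splits pair_append_assoc)

lemma fone_indicator: "fone = (\<lambda>x. if x = [] then 1 else 0)"
  by (simp add: fone_def fun_eq_iff)

lemma fmul_fone_left: "fmul fone f = f"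
  unfolding fmul_conv fone_indicator by (rule ext, rule conv_unit_left) (auto simp: finite_splits)

lemma fmul_fone_right: "fmul f fone = f"
  unfolding fmul_conv fone_indicator by (rule ext, rule conv_unit_right) (auto simp: finite_splits)

lemma ftens_fone_indicator: "ftens fone fone = (\<lambda>x. if x = ([],[]) then 1 else 0)"
  by (auto simp: ftens_def fone_def fun_eq_iff)

lemma tmul_one_left: "tmul (ftens fone fone) f = f"
  unfolding tmul_conv ftens_fone_indicator
  by (rule ext, rule conv_unit_left) (simp add: pair_append_def, rule finite_pair_splits)

lemma tmul_one_right: "tmul f (ftens fone fone) = f"
  unfolding tmul_conv ftens_fone_indicator
  by (rule ext, rule conv_unit_right) (simp add: pair_append_def, rule finite_pair_splits)

definition wrev :: "word \<Rightarrow> word" where "wrev w = rev (map flipl w)"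

lemma flipl_flipl[simp]: "flipl (flipl x) = x"
  by (cases x) (auto simp: flipl_def)

lemma wrev_wrev[simp]: "wrev (wrev w) = w"
  by (simp add: wrev_def rev_map comp_def)

lemma wrev_append: "wrev (a @ b) = wrev b @ wrev a"
  by (simp add: wrev_def)

lemma fstar_wrev: "fstar f = (\<lambda>w. cnj (f (wrev w)))"
  by (simp add: fstar_def wrev_def)

lemma fstar_fmul: "fstar (fmul f g) = fmul (fstar g) (fstar f)"
  unfolding fstar_wrev fmul_conv by (rule conv_reflect) (auto simp: wrev_append)

definition tstar :: "tel \<Rightarrow> tel" where
  "tstar t = (\<lambda>(v,w). cnj (t (wrev v, wrev w)))"

lemma tstar_tmul: "tstar (tmul f g) = tmul (tstar g) (tstar f)"
proof -
  have "tstar t = (\<lambda>P. cnj (t (wrev (fst P), wrev (snd P))))" for t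
    by (auto simp: tstar_def)
  then show ?thesis
    unfolding tmul_conv by (simp only:) (rule conv_reflect, auto simp: pair_append_def wrev_append)
qed

definition supp :: "el \<Rightarrow> word set" where "supp f = {w. f w \<noteq> 0}"
definition fword :: "word \<Rightarrow> el" where "fword v = (\<lambda>w. if w = v then 1 else 0)"

lemma fmul_eq_sum_fword:
  assumes "finite A" "finite B" "supp f \<subseteq> A" "supp g \<subseteq> B"
  shows "fmul f g = (\<lambda>w. \<Sum>p\<in>A \<times> B. (f (fst p) * g (snd p)) * fword (fst p @ snd p) w)"
proof
  fix w
  have "fmul f g w = (\<Sum>p\<in>{p. fst p @ snd p = w}. f (fst p) * g (snd p))"
    by (simp add: fmul_conv conv_def)
  also have "\<dots> = (\<Sum>p\<in>{p\<in>A \<times> B. fst p @ snd p = w}. f (fst p) * g (snd p))"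
    using assms by (intro sum.mono_neutral_cong_right) (auto simp: finite_splits supp_def)
  also have "\<dots> = (\<Sum>p\<in>A \<times> B. (f (fst p) * g (snd p)) * fword (fst p @ snd p) w)"
    by (subst sum.inter_filter) (auto simp: assms fword_def intro!: sum.cong)
  finally show "fmul f g w = (\<Sum>p\<in>A \<times> B. (f (fst p) * g (snd p)) * fword (fst p @ snd p) w)" .
qed

lemma fstar_eq_sum_fword:
  assumes "finite A" "supp f \<subseteq> A"
  shows "fstar f = (\<lambda>w. \<Sum>v\<in>A. cnj (f v) * fword (wrev v) w)"
proof
  fix w
  have "fstar f w = cnj (f (wrev w))" by (simp add: fstar_wrev)
  also have "\<dots> = (\<Sum>v\<in>A. cnj (f v) * fword (wrev v) w)"
  proof (cases "wrev w \<in> A")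
    case True
    have "(\<Sum>v\<in>A. cnj (f v) * fword (wrev v) w) = (\<Sum>v\<in>A. if v = wrev w then cnj (f v) else 0)"
      by (rule sum.cong) (auto simp: fword_def)
    then show ?thesis using True assms by simp
  next
    case False
    have "(\<Sum>v\<in>A. cnj (f v) * fword (wrev v) w) = 0"
      by (rule sum.neutral) (use False in \<open>auto simp: fword_def\<close>)
    then show ?thesis using False assms by (auto simp: supp_def)
  qed
  finally show "fstar f w = (\<Sum>v\<in>A. cnj (f v) * fword (wrev v) w)" .
qed

locale fun_algebra =
  fixes mul :: "('x \<Rightarrow> complex) \<Rightarrow> ('x \<Rightarrow> complex) \<Rightarrow> 'x \<Rightarrow> complex"
    and one :: "'x \<Rightarrow> complex"
  assumes mul_assoc: "mul (mul a b) c = mul a (mul b c)"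
    and mul_one_left: "mul one a = a" and mul_one_right: "mul a one = a"
    and mul_add_left: "mul (\<lambda>x. a x + b x) g = (\<lambda>x. mul a g x + mul b g x)"
    and mul_scale_left: "mul (\<lambda>x. k * a x) g = (\<lambda>x. k * mul a g x)"
    and mul_add_right: "mul g (\<lambda>x. a x + b x) = (\<lambda>x. mul g a x + mul g b x)"
    and mul_scale_right: "mul g (\<lambda>x. k * a x) = (\<lambda>x. k * mul g a x)"
begin

lemma mul_zero_left: "mul (\<lambda>x. 0) g = (\<lambda>x. 0)"
  using mul_scale_left[of 0 g g] by simp
lemma mul_zero_right: "mul g (\<lambda>x. 0) = (\<lambda>x. 0)"
  using mul_scale_right[of g 0 g] by simp

lemma mul_sum_left: "mul (\<lambda>x. \<Sum>i\<in>I. F i x) g = (\<lambda>x. \<Sum>i\<in>I. mul (F i) g x)"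
proof (induction I rule: infinite_finite_induct)
  case (infinite A) then show ?case by (simp add: mul_zero_left)
next
  case empty then show ?case by (simp add: mul_zero_left)
next
  case (insert i A) then show ?case by (simp add: mul_add_left)
qed

lemma mul_sum_right: "mul g (\<lambda>x. \<Sum>i\<in>I. F i x) = (\<lambda>x. \<Sum>i\<in>I. mul g (F i) x)"
proof (induction I rule: infinite_finite_induct)
  case (infinite A) then show ?case by (simp add: mul_zero_right)
next
  case empty then show ?case by (simp add: mul_zero_right)
next
  case (insert i A) then show ?case by (simp add: mul_add_right)
qed

lemma mul_lincomb_left: "mul (\<lambda>x. \<Sum>i\<in>I. c i * F i x) g = (\<lambda>x. \<Sum>i\<in>I. c i * mul (F i) g x)"
  by (simp add: mul_sum_left mul_scale_left)

lemma mul_lincomb_right: "mul g (\<lambda>x. \<Sum>i\<in>I. c i * F i x) = (\<lambda>x. \<Sum>i\<in>I. c i * mul g (F i) x)"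
  by (simp add: mul_sum_right mul_scale_right)

definition word_eval :: "(letter \<Rightarrow> 'x \<Rightarrow> complex) \<Rightarrow> word \<Rightarrow> 'x \<Rightarrow> complex" where
  "word_eval L w = foldr (\<lambda>x acc. mul (L x) acc) w one"

definition lift :: "(letter \<Rightarrow> 'x \<Rightarrow> complex) \<Rightarrow> el \<Rightarrow> 'x \<Rightarrow> complex" where
  "lift L f = (\<lambda>x. \<Sum>v\<in>supp f. f v * word_eval L v x)"

lemma word_eval_nil[simp]: "word_eval L [] = one" by (simp add: word_eval_def)
lemma word_eval_cons[simp]: "word_eval L (y # w) = mul (L y) (word_eval L w)" by (simp add: word_eval_def)

lemma word_eval_append: "word_eval L (a @ b) = mul (word_eval L a) (word_eval L b)"
  by (induction a) (simp_all add: mul_one_left mul_assoc)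

lemma lift_sum: "finite S \<Longrightarrow> supp f \<subseteq> S \<Longrightarrow> lift L f = (\<lambda>x. \<Sum>v\<in>S. f v * word_eval L v x)"
  unfolding lift_def
  by (rule ext, rule sum.mono_neutral_left) (auto simp: supp_def)

lemma lift_fword_lincomb:
  assumes K: "finite K"
  shows "lift L (\<lambda>w. \<Sum>i\<in>K. c i * fword (k i) w) = (\<lambda>x. \<Sum>i\<in>K. c i * word_eval L (k i) x)"
proof -
  let ?f = "\<lambda>w. \<Sum>i\<in>K. c i * fword (k i) w"
  have s: "supp ?f \<subseteq> k ` K"
  proof
    fix w assume "w \<in> supp ?f"
    then have "(\<Sum>i\<in>K. c i * fword (k i) w) \<noteq> 0" by (simp add: supp_def)
    then obtain i where "i \<in> K" "c i * fword (k i) w \<noteq> 0" by (meson sum.neutral)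
    then show "w \<in> k ` K" by (auto simp: fword_def split: if_splits)
  qed
  have fv: "?f v = (\<Sum>i\<in>{i\<in>K. k i = v}. c i)" for v
    using K by (simp add: sum.inter_filter fword_def) (rule sum.cong, auto)
  show ?thesis
  proof
    fix x
    have "lift L ?f x = (\<Sum>v\<in>k ` K. ?f v * word_eval L v x)"
      using lift_sum[OF finite_imageI[OF K] s] by simp
    also have "\<dots> = (\<Sum>v\<in>k ` K. \<Sum>i\<in>{i\<in>K. k i = v}. c i * word_eval L (k i) x)"
      unfolding fv sum_distrib_right by (rule sum.cong) auto
    also have "\<dots> = (\<Sum>i\<in>K. c i * word_eval L (k i) x)"
      by (rule sum.image_gen[OF K, symmetric])
    finally show "lift L ?f x = (\<Sum>i\<in>K. c i * word_eval L (k i) x)" .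
  qed
qed

lemma lift_fmul:
  assumes "finite (supp f)" "finite (supp g)"
  shows "lift L (fmul f g) = mul (lift L f) (lift L g)"
proof -
  have "lift L (fmul f g) = (\<lambda>x. \<Sum>p\<in>supp f \<times> supp g. (f (fst p) * g (snd p)) * word_eval L (fst p @ snd p) x)"
    by (subst fmul_eq_sum_fword[OF assms order_refl order_refl], rule lift_fword_lincomb) (simp add: assms)
  also have "\<dots> = (\<lambda>x. \<Sum>a\<in>supp f. \<Sum>b\<in>supp g. f a * (g b * mul (word_eval L a) (word_eval L b) x))"
    by (simp add: sum.cartesian_product word_eval_append split_beta mult.assoc)
  also have "\<dots> = mul (lift L f) (lift L g)"
    unfolding lift_def mul_lincomb_left mul_lincomb_right by (simp add: sum_distrib_left)
  finally show ?thesis .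
qed

lemma lift_fadd:
  assumes "finite (supp f)" "finite (supp g)"
  shows "lift L (fadd f g) = (\<lambda>x. lift L f x + lift L g x)"
proof -
  have s: "supp (fadd f g) \<subseteq> supp f \<union> supp g" by (auto simp: supp_def fadd_def)
  have fin: "finite (supp f \<union> supp g)" using assms by simp
  have "lift L (fadd f g) = (\<lambda>x. \<Sum>v\<in>supp f \<union> supp g. fadd f g v * word_eval L v x)"
    by (rule lift_sum[OF fin s])
  moreover have "lift L f = (\<lambda>x. \<Sum>v\<in>supp f \<union> supp g. f v * word_eval L v x)"
    by (rule lift_sum[OF fin]) auto
  moreover have "lift L g = (\<lambda>x. \<Sum>v\<in>supp f \<union> supp g. g v * word_eval L v x)"
    by (rule lift_sum[OF fin]) auto
  ultimately show ?thesis
    by (simp add: fadd_def distrib_right sum.distrib)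
qed

lemma lift_fscale:
  assumes "finite (supp f)"
  shows "lift L (fscale c f) = (\<lambda>x. c * lift L f x)"
proof -
  have s: "supp (fscale c f) \<subseteq> supp f" by (auto simp: supp_def fscale_def)
  have "lift L (fscale c f) = (\<lambda>x. \<Sum>v\<in>supp f. fscale c f v * word_eval L v x)"
    by (rule lift_sum[OF assms s])
  then show ?thesis
    by (simp add: lift_def fscale_def sum_distrib_left mult.assoc)
qed

lemma lift_fzero: "lift L fzero = (\<lambda>x. 0)"
  by (simp add: lift_def fzero_def supp_def)

lemma lift_fone: "lift L fone = one"
proof -
  have "supp fone = {[]}" by (auto simp: supp_def fone_def)
  then show ?thesis by (simp add: lift_def fone_def)
qed

lemma lift_fgen: "lift L (fgen y) = L y"
proof -
  have "supp (fgen y) = {[y]}" by (auto simp: supp_def fgen_def)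
  then show ?thesis by (simp add: lift_def fgen_def mul_one_right)
qed

end

locale fun_star_algebra = fun_algebra mul one for mul :: "('x \<Rightarrow> complex) \<Rightarrow> ('x \<Rightarrow> complex) \<Rightarrow> 'x \<Rightarrow> complex" and one +
  fixes adj :: "('x \<Rightarrow> complex) \<Rightarrow> 'x \<Rightarrow> complex"
  assumes adj_add: "adj (\<lambda>x. a x + b x) = (\<lambda>x. adj a x + adj b x)"
    and adj_scale: "adj (\<lambda>x. c * a x) = (\<lambda>x. cnj c * adj a x)"
    and adj_mul: "adj (mul a b) = mul (adj b) (adj a)"
    and adj_one: "adj one = one"
begin

lemma adj_zero: "adj (\<lambda>x. 0) = (\<lambda>x. 0)"
  using adj_scale[of 0 one] by simp

lemma adj_sum: "adj (\<lambda>x. \<Sum>i\<in>I. F i x) = (\<lambda>x. \<Sum>i\<in>I. adj (F i) x)"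
proof (induction I rule: infinite_finite_induct)
  case (infinite A) then show ?case by (simp add: adj_zero)
next
  case empty then show ?case by (simp add: adj_zero)
next
  case (insert i A) then show ?case by (simp add: adj_add)
qed

lemma adj_lincomb: "adj (\<lambda>x. \<Sum>i\<in>I. c i * F i x) = (\<lambda>x. \<Sum>i\<in>I. cnj (c i) * adj (F i) x)"
  by (simp add: adj_sum adj_scale)

lemma word_eval_wrev:
  assumes adj_letter: "\<And>y. L (flipl y) = adj (L y)"
  shows "word_eval L (wrev w) = adj (word_eval L w)"
proof (induction w)
  case Nil then show ?case by (simp add: wrev_def adj_one)
next
  case (Cons y w)
  have "wrev (y # w) = wrev w @ [flipl y]" by (simp add: wrev_def)
  then show ?case using Cons by (simp add: word_eval_append mul_one_right adj_letter adj_mul)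
qed

lemma lift_fstar:
  assumes adj_letter: "\<And>y. L (flipl y) = adj (L y)" and F: "finite (supp f)"
  shows "lift L (fstar f) = adj (lift L f)"
proof -
  have "lift L (fstar f) = (\<lambda>x. \<Sum>v\<in>supp f. cnj (f v) * word_eval L (wrev v) x)"
    by (subst fstar_eq_sum_fword[OF F order_refl], rule lift_fword_lincomb) (simp add: F)
  also have "\<dots> = adj (lift L f)"
    unfolding lift_def adj_lincomb using adj_letter by (simp add: word_eval_wrev)
  finally show ?thesis .
qed

end

lemma Fr_iff: "f \<in> Fr M \<longleftrightarrow> finite (supp f) \<and> (\<forall>w\<in>supp f. set w \<subseteq> letters M)"
  by (auto simp: Fr_def supp_def)

lemma Fr_finite_supp: "f \<in> Fr M \<Longrightarrow> finite (supp f)" by (simp add: Fr_iff)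

lemma Fr_supp_mono: "g \<in> Fr M \<Longrightarrow> supp f \<subseteq> supp g \<Longrightarrow> f \<in> Fr M"
  unfolding Fr_iff by (meson finite_subset subsetD)

lemma fzero_Fr[simp]: "fzero \<in> Fr M" by (simp add: Fr_iff supp_def fzero_def)
lemma fone_Fr[simp]: "fone \<in> Fr M" by (simp add: Fr_iff supp_def fone_def)
lemma fgen_Fr: "x \<in> letters M \<Longrightarrow> fgen x \<in> Fr M"
proof -
  have "supp (fgen x) = {[x]}" by (auto simp: supp_def fgen_def)
  then show "x \<in> letters M \<Longrightarrow> fgen x \<in> Fr M" by (simp add: Fr_iff)
qed

lemma idx_letters: "j \<in> idx M \<Longrightarrow> k \<in> idx M \<Longrightarrow> (j,k,b) \<in> letters M"
  by (simp add: idx_def letters_def)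

lemma u_Fr[simp]: "j \<in> idx M \<Longrightarrow> k \<in> idx M \<Longrightarrow> u j k \<in> Fr M"
  by (simp add: u_def fgen_Fr idx_letters)
lemma us_Fr[simp]: "j \<in> idx M \<Longrightarrow> k \<in> idx M \<Longrightarrow> us j k \<in> Fr M"
  by (simp add: us_def fgen_Fr idx_letters)

lemma fadd_Fr[simp]: "f \<in> Fr M \<Longrightarrow> g \<in> Fr M \<Longrightarrow> fadd f g \<in> Fr M"
proof -
  assume a: "f \<in> Fr M" "g \<in> Fr M"
  have "supp (fadd f g) \<subseteq> supp f \<union> supp g" by (auto simp: supp_def fadd_def)
  then show ?thesis using a unfolding Fr_iff by (meson Un_iff finite_Un finite_subset subsetD)
qed

lemma fscale_Fr[simp]: "f \<in> Fr M \<Longrightarrow> fscale c f \<in> Fr M"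
  by (rule Fr_supp_mono) (auto simp: supp_def fscale_def)

lemma fsub_eq: "fsub f g = fadd f (fscale (-1) g)"
  by (simp add: fsub_def fadd_def fscale_def fun_eq_iff)

lemma fsub_Fr[simp]: "f \<in> Fr M \<Longrightarrow> g \<in> Fr M \<Longrightarrow> fsub f g \<in> Fr M"
  by (simp add: fsub_eq)

lemma fsumset_Fr[simp]: "finite S \<Longrightarrow> (\<And>i. i \<in> S \<Longrightarrow> F i \<in> Fr M) \<Longrightarrow> fsumset S F \<in> Fr M"
proof (induction S rule: finite_induct)
  case empty
  have "fsumset {} F = fzero" by (simp add: fsumset_def fzero_def)
  then show ?case by simp
next
  case (insert i S)
  have "fsumset (insert i S) F = fadd (F i) (fsumset S F)"
    using insert by (simp add: fsumset_def fadd_def)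
  then show ?case using insert by simp
qed

lemma fmul_Fr[simp]: "f \<in> Fr M \<Longrightarrow> g \<in> Fr M \<Longrightarrow> fmul f g \<in> Fr M"
proof -
  assume a: "f \<in> Fr M" "g \<in> Fr M"
  have fmul_expand: "fmul f g = (\<lambda>w. \<Sum>p\<in>supp f \<times> supp g. (f (fst p) * g (snd p)) * fword (fst p @ snd p) w)"
    using a by (intro fmul_eq_sum_fword) (auto simp: Fr_finite_supp)
  have S: "supp (fmul f g) \<subseteq> (\<lambda>p. fst p @ snd p) ` (supp f \<times> supp g)"
  proof
    fix w assume "w \<in> supp (fmul f g)"
    then have "(\<Sum>p\<in>supp f \<times> supp g. (f (fst p) * g (snd p)) * fword (fst p @ snd p) w) \<noteq> 0"
      by (simp add: supp_def fmul_expand)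
    then obtain p where p: "p \<in> supp f \<times> supp g" "(f (fst p) * g (snd p)) * fword (fst p @ snd p) w \<noteq> 0"
      by (rule sum.not_neutral_contains_not_neutral)
    then have "w = fst p @ snd p" by (simp add: fword_def split: if_splits)
    then show "w \<in> (\<lambda>p. fst p @ snd p) ` (supp f \<times> supp g)" using p(1) by (rule image_eqI)
  qed
  have F: "finite ((\<lambda>p. fst p @ snd p) ` (supp f \<times> supp g))" using a by (simp add: Fr_finite_supp)
  have L: "\<forall>w\<in>(\<lambda>p. fst p @ snd p) ` (supp f \<times> supp g). set w \<subseteq> letters M"
    using a by (auto simp: Fr_iff)
  show ?thesis unfolding Fr_iff using finite_subset[OF S F] S L by blast
qed

lemma flipl_letters: "x \<in> letters M \<Longrightarrow> flipl x \<in> letters M"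
  by (cases x) (auto simp: letters_def flipl_def)

lemma fstar_Fr[simp]: "f \<in> Fr M \<Longrightarrow> fstar f \<in> Fr M"
proof -
  assume a: "f \<in> Fr M"
  have "supp (fstar f) \<subseteq> wrev ` supp f"
  proof
    fix w assume "w \<in> supp (fstar f)"
    then have "wrev w \<in> supp f" by (simp add: supp_def fstar_wrev)
    then show "w \<in> wrev ` supp f" using wrev_wrev[of w] by (metis image_eqI)
  qed
  moreover have "finite (wrev ` supp f)" using a by (simp add: Fr_finite_supp)
  moreover have "\<forall>w\<in>wrev ` supp f. set w \<subseteq> letters M"
  proof
    fix w assume "w \<in> wrev ` supp f"
    then obtain v where v: "v \<in> supp f" "w = wrev v" by auto
    then have sv: "set v \<subseteq> letters M" using a by (simp add: Fr_iff)
    show "set w \<subseteq> letters M" using v sv flipl_letters by (auto simp: wrev_def)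
  qed
  ultimately show ?thesis unfolding Fr_iff using finite_subset by blast
qed

lemma fmul_fsub_left: "fmul (fsub a b) c = fsub (fmul a c) (fmul b c)"
  by (simp add: fmul_def fsub_def fun_eq_iff left_diff_distrib sum_subtractf)
lemma fmul_fsub_right: "fmul c (fsub a b) = fsub (fmul c a) (fmul c b)"
  by (simp add: fmul_def fsub_def fun_eq_iff right_diff_distrib sum_subtractf)
lemma fmul_fadd_left: "fmul (fadd a b) c = fadd (fmul a c) (fmul b c)"
  by (simp add: fmul_def fadd_def fun_eq_iff distrib_right sum.distrib)
lemma fmul_fadd_right: "fmul c (fadd a b) = fadd (fmul c a) (fmul c b)"
  by (simp add: fmul_def fadd_def fun_eq_iff distrib_left sum.distrib)
lemma fmul_fscale_left: "fmul (fscale k a) c = fscale k (fmul a c)"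
  by (simp add: fmul_def fscale_def fun_eq_iff sum_distrib_left mult.assoc)
lemma fmul_fscale_right: "fmul c (fscale k a) = fscale k (fmul c a)"
  by (simp add: fmul_def fscale_def fun_eq_iff sum_distrib_left mult.left_commute)
lemma fstar_fsub: "fstar (fsub a b) = fsub (fstar a) (fstar b)"
  by (simp add: fstar_def fsub_def)
lemma fstar_fscale: "fstar (fscale k a) = fscale (cnj k) (fstar a)"
  by (simp add: fstar_def fscale_def)

section \<open>Quotients by *-ideals\<close>

context
  fixes M :: nat and R :: "el set"
  assumes rel_Fr: "R \<subseteq> Fr M"
begin

lemma starIdeal_Fr: "a \<in> starIdeal M R \<Longrightarrow> a \<in> Fr M"
  by (induction rule: starIdeal.induct) (use rel_Fr in auto)

lemma starIdeal_fsub: "a \<in> starIdeal M R \<Longrightarrow> b \<in> starIdeal M R \<Longrightarrow> fsub a b \<in> starIdeal M R"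
  unfolding fsub_eq by (intro starIdeal.add starIdeal.scale)

lemma cls_self: "p \<in> Fr M \<Longrightarrow> p \<in> cls M (starIdeal M R) p"
  using starIdeal.zero[of M R] by (simp add: cls_def fsub_def fzero_def)

lemma cls_eq_iff: "p \<in> Fr M \<Longrightarrow> q \<in> Fr M \<Longrightarrow>
   cls M (starIdeal M R) p = cls M (starIdeal M R) q \<longleftrightarrow> fsub p q \<in> starIdeal M R"
proof
  assume p: "p \<in> Fr M" and q: "q \<in> Fr M"
  {
    assume "cls M (starIdeal M R) p = cls M (starIdeal M R) q"
    then have "q \<in> cls M (starIdeal M R) p" using cls_self[OF q] by simp
    then show "fsub p q \<in> starIdeal M R" by (simp add: cls_def)
  }
  {
    assume pq: "fsub p q \<in> starIdeal M R"
    show "cls M (starIdeal M R) p = cls M (starIdeal M R) q"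
      unfolding cls_def
    proof (intro Collect_cong conj_cong refl)
      fix x
      show "(fsub p x \<in> starIdeal M R) = (fsub q x \<in> starIdeal M R)"
      proof
        assume px: "fsub p x \<in> starIdeal M R"
        have "fsub q x = fadd (fscale (-1) (fsub p q)) (fsub p x)"
          by (simp add: fsub_def fadd_def fscale_def fun_eq_iff)
        then show "fsub q x \<in> starIdeal M R"
          using pq px by (simp add: starIdeal.add starIdeal.scale)
      next
        assume qx: "fsub q x \<in> starIdeal M R"
        have "fsub p x = fadd (fsub p q) (fsub q x)"
          by (simp add: fsub_def fadd_def fun_eq_iff)
        then show "fsub p x \<in> starIdeal M R"
          using pq qx by (simp add: starIdeal.add)
      qed
    qed
  }
qed

lemma cls_memD: "p' \<in> cls M (starIdeal M R) p \<Longrightarrow> p' \<in> Fr M \<and> fsub p p' \<in> starIdeal M R"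
  by (simp add: cls_def)

lemma UN_cls:
  assumes p: "p \<in> Fr M"
    and h: "\<And>p'. p' \<in> cls M (starIdeal M R) p \<Longrightarrow> cls M (starIdeal M R) (h p') = cls M (starIdeal M R) (h p)"
  shows "(\<Union>p'\<in>cls M (starIdeal M R) p. cls M (starIdeal M R) (h p')) = cls M (starIdeal M R) (h p)"
proof -
  have "(\<Union>p'\<in>cls M (starIdeal M R) p. cls M (starIdeal M R) (h p')) = (\<Union>p'\<in>cls M (starIdeal M R) p. cls M (starIdeal M R) (h p))"
    by (rule SUP_cong[OF refl h])
  then show ?thesis using cls_self[OF p] by auto
qed

lemma UN_cls2:
  assumes p: "p \<in> Fr M" and q: "q \<in> Fr M"
    and h: "\<And>p' q'. p' \<in> cls M (starIdeal M R) p \<Longrightarrow> q' \<in> cls M (starIdeal M R) q \<Longrightarrow>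
              cls M (starIdeal M R) (h p' q') = cls M (starIdeal M R) (h p q)"
  shows "(\<Union>p'\<in>cls M (starIdeal M R) p. \<Union>q'\<in>cls M (starIdeal M R) q. cls M (starIdeal M R) (h p' q')) = cls M (starIdeal M R) (h p q)"
proof -
  have "(\<Union>p'\<in>cls M (starIdeal M R) p. \<Union>q'\<in>cls M (starIdeal M R) q. cls M (starIdeal M R) (h p' q')) =
        (\<Union>p'\<in>cls M (starIdeal M R) p. \<Union>q'\<in>cls M (starIdeal M R) q. cls M (starIdeal M R) (h p q))"
    by (rule SUP_cong[OF refl], rule SUP_cong[OF refl], rule h)
  then show ?thesis using cls_self[OF p] cls_self[OF q] by auto
qed

lemma qadd_cls: "p \<in> Fr M \<Longrightarrow> q \<in> Fr M \<Longrightarrow>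
  qadd M (starIdeal M R) (cls M (starIdeal M R) p) (cls M (starIdeal M R) q) = cls M (starIdeal M R) (fadd p q)"
  unfolding qadd_def
proof (rule UN_cls2)
  fix p' q' assume "p \<in> Fr M" "q \<in> Fr M" "p' \<in> cls M (starIdeal M R) p" "q' \<in> cls M (starIdeal M R) q"
  moreover have "fsub (fadd p' q') (fadd p q) = fscale (-1) (fadd (fsub p p') (fsub q q'))"
    by (simp add: fsub_def fadd_def fscale_def fun_eq_iff)
  ultimately show "cls M (starIdeal M R) (fadd p' q') = cls M (starIdeal M R) (fadd p q)"
    by (subst cls_eq_iff) (auto dest!: cls_memD intro!: starIdeal.scale starIdeal.add)
qed

lemma qscale_cls: "p \<in> Fr M \<Longrightarrow>
  qscale M (starIdeal M R) c (cls M (starIdeal M R) p) = cls M (starIdeal M R) (fscale c p)"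
  unfolding qscale_def
proof (rule UN_cls)
  fix p' assume "p \<in> Fr M" "p' \<in> cls M (starIdeal M R) p"
  moreover have "fsub (fscale c p') (fscale c p) = fscale (-c) (fsub p p')"
    by (simp add: fsub_def fscale_def fun_eq_iff algebra_simps)
  ultimately show "cls M (starIdeal M R) (fscale c p') = cls M (starIdeal M R) (fscale c p)"
    by (subst cls_eq_iff) (auto dest!: cls_memD intro!: starIdeal.scale)
qed

lemma qstar_cls: "p \<in> Fr M \<Longrightarrow>
  qstar M (starIdeal M R) (cls M (starIdeal M R) p) = cls M (starIdeal M R) (fstar p)"
  unfolding qstar_def
proof (rule UN_cls)
  fix p' assume "p \<in> Fr M" "p' \<in> cls M (starIdeal M R) p"
  moreover have "fsub (fstar p') (fstar p) = fscale (-1) (fstar (fsub p p'))"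
    by (simp add: fsub_def fstar_def fscale_def fun_eq_iff)
  ultimately show "cls M (starIdeal M R) (fstar p') = cls M (starIdeal M R) (fstar p)"
    by (subst cls_eq_iff) (auto dest!: cls_memD intro!: starIdeal.scale starIdeal.star)
qed

lemma qmul_cls: "p \<in> Fr M \<Longrightarrow> q \<in> Fr M \<Longrightarrow>
  qmul M (starIdeal M R) (cls M (starIdeal M R) p) (cls M (starIdeal M R) q) = cls M (starIdeal M R) (fmul p q)"
  unfolding qmul_def
proof (rule UN_cls2)
  fix p' q' assume "p \<in> Fr M" "q \<in> Fr M" "p' \<in> cls M (starIdeal M R) p" "q' \<in> cls M (starIdeal M R) q"
  moreover have "fsub (fmul p' q') (fmul p q) = fscale (-1) (fadd (fmul (fsub p p') q') (fmul p (fsub q q')))"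
    by (simp add: fmul_fsub_left fmul_fsub_right) (simp add: fsub_def fadd_def fscale_def fun_eq_iff)
  ultimately show "cls M (starIdeal M R) (fmul p' q') = cls M (starIdeal M R) (fmul p q)"
    by (subst cls_eq_iff) (auto dest!: cls_memD intro!: starIdeal.scale starIdeal.add
        intro: starIdeal.rmul starIdeal.lmul)
qed

end

inductive_set evens :: "nat \<Rightarrow> el set" for M where
  one: "fone \<in> evens M"
| gen: "j \<in> idx M \<Longrightarrow> k \<in> idx M \<Longrightarrow> l \<in> idx M \<Longrightarrow> m \<in> idx M \<Longrightarrow> fmul (us j k) (u l m) \<in> evens M"
| add: "p \<in> evens M \<Longrightarrow> q \<in> evens M \<Longrightarrow> fadd p q \<in> evens M"
| scale: "p \<in> evens M \<Longrightarrow> fscale c p \<in> evens M"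
| mul: "p \<in> evens M \<Longrightarrow> q \<in> evens M \<Longrightarrow> fmul p q \<in> evens M"
| star: "p \<in> evens M \<Longrightarrow> fstar p \<in> evens M"

lemma evens_Fr: "p \<in> evens M \<Longrightarrow> p \<in> Fr M"
  by (induction rule: evens.induct) auto

lemma cls_evens_in_subalgS:
  assumes rel_Fr: "R \<subseteq> Fr M" and p: "p \<in> evens M"
  shows "cls M (starIdeal M R) p \<in> subalgS M (starIdeal M R)"
  using p
proof (induction rule: evens.induct)
  case one then show ?case using subalgS.one by (simp add: qone_def)
next
  case (gen j k l m) then show ?case by (rule subalgS.gen)
next
  case (add p q) then show ?case
    using subalgS.add[OF add.IH] by (simp add: qadd_cls[OF rel_Fr] evens_Fr)
next
  case (scale p c) then show ?case
    using subalgS.scale[OF scale.IH] by (simp add: qscale_cls[OF rel_Fr] evens_Fr)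
next
  case (mul p q) then show ?case
    using subalgS.mul[OF mul.IH] by (simp add: qmul_cls[OF rel_Fr] evens_Fr)
next
  case (star p) then show ?case
    using subalgS.star[OF star.IH] by (simp add: qstar_cls[OF rel_Fr] evens_Fr)
qed

lemma subalgS_eq_cls_evens:
  assumes rel_Fr: "R \<subseteq> Fr M"
  shows "subalgS M (starIdeal M R) = cls M (starIdeal M R) ` evens M"
proof
  show "subalgS M (starIdeal M R) \<subseteq> cls M (starIdeal M R) ` evens M"
  proof
    fix X assume "X \<in> subalgS M (starIdeal M R)"
    then show "X \<in> cls M (starIdeal M R) ` evens M"
    proof (induction rule: subalgS.induct)
      case one then show ?case by (auto simp: qone_def intro: evens.one)
    next
      case (gen j k l m) then show ?case by (auto intro: evens.gen)
    next
      case (add X Y) then show ?case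
        by (auto simp: qadd_cls[OF rel_Fr] evens_Fr intro!: imageI evens.add)
    next
      case (scale X c) then show ?case
        by (auto simp: qscale_cls[OF rel_Fr] evens_Fr intro!: imageI evens.scale)
    next
      case (mul X Y) then show ?case
        by (auto simp: qmul_cls[OF rel_Fr] evens_Fr intro!: imageI evens.mul)
    next
      case (star X) then show ?case
        by (auto simp: qstar_cls[OF rel_Fr] evens_Fr intro!: imageI evens.star)
    qed
  qed
  show "cls M (starIdeal M R) ` evens M \<subseteq> subalgS M (starIdeal M R)"
    using cls_evens_in_subalgS[OF rel_Fr] by blast
qed

interpretation tensor_alg: fun_star_algebra tmul "ftens fone fone" tstar
proof
  fix a b c :: tel and k :: complex and g :: tel
  show "tmul (tmul a b) c = tmul a (tmul b c)" by (rule tmul_assoc)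
  show "tmul (ftens fone fone) a = a" by (rule tmul_one_left)
  show "tmul a (ftens fone fone) = a" by (rule tmul_one_right)
  show "tmul (\<lambda>x. a x + b x) g = (\<lambda>x. tmul a g x + tmul b g x)"
    by (simp add: tmul_def fun_eq_iff distrib_right sum.distrib split_beta)
  show "tmul (\<lambda>x. k * a x) g = (\<lambda>x. k * tmul a g x)"
    by (simp add: tmul_def fun_eq_iff sum_distrib_left mult.assoc split_beta)
  show "tmul g (\<lambda>x. a x + b x) = (\<lambda>x. tmul g a x + tmul g b x)"
    by (simp add: tmul_def fun_eq_iff distrib_left sum.distrib split_beta)
  show "tmul g (\<lambda>x. k * a x) = (\<lambda>x. k * tmul g a x)"
    by (simp add: tmul_def fun_eq_iff sum_distrib_left mult.left_commute split_beta)
  show "tstar (\<lambda>x. a x + b x) = (\<lambda>x. tstar a x + tstar b x)"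
    by (simp add: tstar_def fun_eq_iff split_beta)
  show "tstar (\<lambda>x. k * a x) = (\<lambda>x. cnj k * tstar a x)"
    by (simp add: tstar_def fun_eq_iff split_beta)
  show "tstar (tmul a b) = tmul (tstar b) (tstar a)" by (rule tstar_tmul)
  show "tstar (ftens fone fone) = ftens fone fone"
    by (auto simp: tstar_def ftens_def fone_def fun_eq_iff wrev_def)
qed

lemma dword_eq_word_eval: "dword M w = tensor_alg.word_eval (dletter M) w"
  by (induction w) auto

lemma fDelta_eq_lift: "fDelta M f = tensor_alg.lift (dletter M) f"
  by (simp add: fDelta_def tensor_alg.lift_def supp_def dword_eq_word_eval)

lemma fstar_fgen: "fstar (fgen x) = fgen (flipl x)"
  by (auto simp: fstar_wrev fgen_def wrev_def fun_eq_iff)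

lemma tstar_ftens: "tstar (ftens a b) = ftens (fstar a) (fstar b)"
  by (simp add: tstar_def ftens_def fstar_wrev fun_eq_iff)

lemma map_flipl_eq: "map flipl a = b \<longleftrightarrow> a = map flipl b"
  by (auto simp: o_def)

lemma map_flipl_single: "map flipl a = [y] \<longleftrightarrow> a = [flipl y]"
  by (simp add: map_flipl_eq)

lemma cnj_indicator: "cnj (if P then 1 else 0) = (if P then 1 else 0)"
  by simp

lemma flipl_apply[simp]: "flipl (j,k,b) = (j,k,\<not>b)" by (simp add: flipl_def)

lemma dletter_flip: "dletter M (flipl y) = tstar (dletter M y)"
proof -
  obtain j k b where y: "y = (j,k,b)" by (cases y)
  show ?thesis
    by (simp add: y dletter_def tsumset_def tstar_def ftens_def fstar_wrev fgen_def wrev_def fun_eq_iff split_beta map_flipl_single cnj_indicator)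
qed

lemma fDelta_fmul: "f \<in> Fr M \<Longrightarrow> g \<in> Fr M \<Longrightarrow> fDelta M (fmul f g) = tmul (fDelta M f) (fDelta M g)"
  by (simp add: fDelta_eq_lift tensor_alg.lift_fmul Fr_finite_supp)
lemma fDelta_fadd: "f \<in> Fr M \<Longrightarrow> g \<in> Fr M \<Longrightarrow> fDelta M (fadd f g) = tadd (fDelta M f) (fDelta M g)"
  by (simp add: fDelta_eq_lift tensor_alg.lift_fadd Fr_finite_supp tadd_def)
lemma fDelta_fscale: "f \<in> Fr M \<Longrightarrow> fDelta M (fscale c f) = tscale c (fDelta M f)"
  by (simp add: fDelta_eq_lift tensor_alg.lift_fscale Fr_finite_supp tscale_def)
lemma fDelta_fstar: "f \<in> Fr M \<Longrightarrow> fDelta M (fstar f) = tstar (fDelta M f)"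
  by (simp add: fDelta_eq_lift Fr_finite_supp dletter_flip tensor_alg.lift_fstar)
lemma fDelta_fone: "fDelta M fone = ftens fone fone"
  by (simp add: fDelta_eq_lift tensor_alg.lift_fone)
lemma fDelta_fzero: "fDelta M fzero = (\<lambda>x. 0)"
  by (simp add: fDelta_eq_lift tensor_alg.lift_fzero)
lemma fDelta_fgen: "fDelta M (fgen y) = dletter M y"
  by (simp add: fDelta_eq_lift tensor_alg.lift_fgen)

(* Wrapping el and tel in datatypes makes them instances of ring_1, so that the computations
   with the defining relations below can use the library's ring algebra. *)

datatype ncpoly = Poly (coeffs: el)

instantiation ncpoly :: ring_1
begin
definition zero_ncpoly_def: "0 = Poly fzero"
definition one_ncpoly_def: "1 = Poly fone"
definition plus_ncpoly_def: "a + b = Poly (fadd (coeffs a) (coeffs b))"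
definition minus_ncpoly_def: "a - b = Poly (fsub (coeffs a) (coeffs b))"
definition uminus_ncpoly_def: "- a = Poly (fscale (-1) (coeffs a))"
definition times_ncpoly_def: "a * b = Poly (fmul (coeffs a) (coeffs b))"
instance
proof
  fix a b c :: ncpoly
  show "a + b + c = a + (b + c)" by (simp add: plus_ncpoly_def fadd_def add.assoc)
  show "a + b = b + a" by (simp add: plus_ncpoly_def fadd_def add.commute)
  show "0 + a = a" by (cases a) (simp add: plus_ncpoly_def zero_ncpoly_def fadd_def fzero_def)
  show "- a + a = 0" by (simp add: plus_ncpoly_def zero_ncpoly_def uminus_ncpoly_def fadd_def fzero_def fscale_def)
  show "a - b = a + - b" by (simp add: plus_ncpoly_def minus_ncpoly_def uminus_ncpoly_def fadd_def fsub_def fscale_def)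
  show "a * b * c = a * (b * c)" by (simp add: times_ncpoly_def fmul_assoc)
  show "(a + b) * c = a * c + b * c" by (simp add: times_ncpoly_def plus_ncpoly_def fmul_fadd_left)
  show "a * (b + c) = a * b + a * c" by (simp add: times_ncpoly_def plus_ncpoly_def fmul_fadd_right)
  show "1 * a = a" by (cases a) (simp add: times_ncpoly_def one_ncpoly_def fmul_fone_left)
  show "a * 1 = a" by (cases a) (simp add: times_ncpoly_def one_ncpoly_def fmul_fone_right)
  show "(0::ncpoly) \<noteq> 1" by (simp add: zero_ncpoly_def one_ncpoly_def fzero_def fone_def fun_eq_iff)
qed
end

definition scal :: "complex \<Rightarrow> ncpoly" where "scal c = Poly (fscale c fone)"

lemma Poly_fadd: "Poly (fadd f g) = Poly f + Poly g" by (simp add: plus_ncpoly_def)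
lemma Poly_fsub: "Poly (fsub f g) = Poly f - Poly g" by (simp add: minus_ncpoly_def)
lemma Poly_fmul: "Poly (fmul f g) = Poly f * Poly g" by (simp add: times_ncpoly_def)
lemma Poly_fzero: "Poly fzero = 0" by (simp add: zero_ncpoly_def)
lemma Poly_fone: "Poly fone = 1" by (simp add: one_ncpoly_def)
lemma Poly_fscale: "Poly (fscale c f) = scal c * Poly f"
  by (simp add: times_ncpoly_def scal_def fmul_fscale_left fmul_fone_left)
lemma coeffs_0: "coeffs 0 = fzero" by (simp add: zero_ncpoly_def)
lemma coeffs_1: "coeffs 1 = fone" by (simp add: one_ncpoly_def)
lemma coeffs_plus: "coeffs (a + b) = fadd (coeffs a) (coeffs b)" by (simp add: plus_ncpoly_def)
lemma coeffs_minus: "coeffs (a - b) = fsub (coeffs a) (coeffs b)" by (simp add: minus_ncpoly_def)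
lemma coeffs_uminus: "coeffs (- a) = fscale (-1) (coeffs a)" by (simp add: uminus_ncpoly_def)
lemma coeffs_times: "coeffs (a * b) = fmul (coeffs a) (coeffs b)" by (simp add: times_ncpoly_def)

lemma Poly_fsumset: "Poly (fsumset S F) = (\<Sum>i\<in>S. Poly (F i))"
proof (induction S rule: infinite_finite_induct)
  case (infinite A)
  then show ?case by (simp add: fsumset_def Poly_fzero[symmetric] fzero_def)
next
  case empty
  then show ?case by (simp add: fsumset_def Poly_fzero[symmetric] fzero_def)
next
  case (insert i A)
  have "fsumset (insert i A) F = fadd (F i) (fsumset A F)"
    using insert by (simp add: fsumset_def fadd_def)
  then show ?case using insert by (simp add: Poly_fadd)
qed

lemma scal_0[simp]: "scal 0 = 0" by (simp add: scal_def zero_ncpoly_def fscale_def fzero_def)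
lemma scal_1[simp]: "scal 1 = 1" by (simp add: scal_def one_ncpoly_def fscale_def)
lemma scal_mult: "scal (a * b) = scal a * scal b"
  by (simp add: scal_def times_ncpoly_def fmul_fscale_left fmul_fscale_right fmul_fone_left) (simp add: fscale_def mult_ac)
lemma scal_comm: "scal c * x = x * scal c"
  by (simp add: scal_def times_ncpoly_def fmul_fscale_left fmul_fscale_right fmul_fone_left fmul_fone_right)

definition padj :: "ncpoly \<Rightarrow> ncpoly" where "padj a = Poly (fstar (coeffs a))"

lemma padj_mult: "padj (a * b) = padj b * padj a" by (simp add: padj_def times_ncpoly_def fstar_fmul)
lemma padj_diff: "padj (a - b) = padj a - padj b" by (simp add: padj_def minus_ncpoly_def fstar_fsub)

datatype nctensor = Tens (tcoeffs: tel)

instantiation nctensor :: ring_1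
begin
definition zero_nctensor_def: "0 = Tens (\<lambda>x. 0)"
definition one_nctensor_def: "1 = Tens (ftens fone fone)"
definition plus_nctensor_def: "a + b = Tens (tadd (tcoeffs a) (tcoeffs b))"
definition minus_nctensor_def: "a - b = Tens (tsub (tcoeffs a) (tcoeffs b))"
definition uminus_nctensor_def: "- a = Tens (tscale (-1) (tcoeffs a))"
definition times_nctensor_def: "a * b = Tens (tmul (tcoeffs a) (tcoeffs b))"
instance
proof
  fix a b c :: nctensor
  show "a + b + c = a + (b + c)" by (simp add: plus_nctensor_def tadd_def add.assoc)
  show "a + b = b + a" by (simp add: plus_nctensor_def tadd_def add.commute)
  show "0 + a = a" by (cases a) (simp add: plus_nctensor_def zero_nctensor_def tadd_def)
  show "- a + a = 0" by (simp add: plus_nctensor_def zero_nctensor_def uminus_nctensor_def tadd_def tscale_def)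
  show "a - b = a + - b" by (simp add: plus_nctensor_def minus_nctensor_def uminus_nctensor_def tadd_def tsub_def tscale_def)
  show "a * b * c = a * (b * c)" by (simp add: times_nctensor_def tmul_assoc)
  show "(a + b) * c = a * c + b * c" by (simp add: times_nctensor_def plus_nctensor_def tadd_def tensor_alg.mul_add_left)
  show "a * (b + c) = a * b + a * c" by (simp add: times_nctensor_def plus_nctensor_def tadd_def tensor_alg.mul_add_right)
  show "1 * a = a" by (cases a) (simp add: times_nctensor_def one_nctensor_def tmul_one_left)
  show "a * 1 = a" by (cases a) (simp add: times_nctensor_def one_nctensor_def tmul_one_right)
  show "(0::nctensor) \<noteq> 1" by (simp add: zero_nctensor_def one_nctensor_def ftens_def fone_def fun_eq_iff)
qed
end

definition tensor :: "ncpoly \<Rightarrow> ncpoly \<Rightarrow> nctensor" where "tensor a b = Tens (ftens (coeffs a) (coeffs b))"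

lemma ftens_tmul: "tmul (ftens a b) (ftens c d) = ftens (fmul a c) (fmul b d)"
  by (simp add: tmul_def ftens_def fmul_def fun_eq_iff sum_product mult_ac)

lemma tensor_mult: "tensor a b * tensor c d = tensor (a * c) (b * d)"
  by (simp add: tensor_def times_nctensor_def times_ncpoly_def ftens_tmul)
lemma tensor_add_left: "tensor (a + b) c = tensor a c + tensor b c"
  by (simp add: tensor_def plus_nctensor_def plus_ncpoly_def ftens_def tadd_def fadd_def fun_eq_iff split_beta distrib_right)
lemma tensor_add_right: "tensor c (a + b) = tensor c a + tensor c b"
  by (simp add: tensor_def plus_nctensor_def plus_ncpoly_def ftens_def tadd_def fadd_def fun_eq_iff split_beta distrib_left)
lemma tensor_0_left: "tensor 0 c = 0"
  by (simp add: tensor_def zero_nctensor_def zero_ncpoly_def ftens_def fzero_def fun_eq_iff split_beta)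
lemma tensor_0_right: "tensor c 0 = 0"
  by (simp add: tensor_def zero_nctensor_def zero_ncpoly_def ftens_def fzero_def fun_eq_iff split_beta)
lemma tensor_1: "tensor 1 1 = 1" by (simp add: tensor_def one_nctensor_def one_ncpoly_def)
lemma tensor_sum_left: "tensor (\<Sum>i\<in>S. F i) c = (\<Sum>i\<in>S. tensor (F i) c)"
  by (induction S rule: infinite_finite_induct) (simp_all add: tensor_0_left tensor_add_left)
lemma tensor_sum_right: "tensor c (\<Sum>i\<in>S. F i) = (\<Sum>i\<in>S. tensor c (F i))"
  by (induction S rule: infinite_finite_induct) (simp_all add: tensor_0_right tensor_add_right)

lemma Tens_tadd: "Tens (tadd s t) = Tens s + Tens t" by (simp add: plus_nctensor_def)
lemma Tens_tmul: "Tens (tmul s t) = Tens s * Tens t" by (simp add: times_nctensor_def)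
lemma Tens_zero: "Tens (\<lambda>x. 0) = 0" by (simp add: zero_nctensor_def)
lemma Tens_one: "Tens (ftens fone fone) = 1" by (simp add: one_nctensor_def)
lemma Tens_ftens: "Tens (ftens a b) = tensor (Poly a) (Poly b)" by (simp add: tensor_def)
lemma tcoeffs_plus: "tcoeffs (a + b) = tadd (tcoeffs a) (tcoeffs b)" by (simp add: plus_nctensor_def)
lemma tcoeffs_0: "tcoeffs 0 = (\<lambda>x. 0)" by (simp add: zero_nctensor_def)

lemma Tens_tsumset: "Tens (tsumset S F) = (\<Sum>i\<in>S. Tens (F i))"
proof (induction S rule: infinite_finite_induct)
  case (infinite A)
  then show ?case by (simp add: tsumset_def Tens_zero[symmetric])
next
  case empty
  then show ?case by (simp add: tsumset_def Tens_zero[symmetric])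
next
  case (insert i A)
  have "tsumset (insert i A) F = tadd (F i) (tsumset A F)"
    using insert by (simp add: tsumset_def tadd_def)
  then show ?case using insert by (simp add: Tens_tadd)
qed

definition Delta :: "nat \<Rightarrow> ncpoly \<Rightarrow> nctensor" where "Delta M a = Tens (fDelta M (coeffs a))"

definition gen :: "bool \<Rightarrow> nat \<Rightarrow> nat \<Rightarrow> ncpoly" where "gen b j k = Poly (fgen (j,k,b))"

lemma gen_Fr: "j \<in> idx M \<Longrightarrow> k \<in> idx M \<Longrightarrow> coeffs (gen b j k) \<in> Fr M"
  by (simp add: gen_def fgen_Fr idx_letters)

lemma Delta_mult: "coeffs a \<in> Fr M \<Longrightarrow> coeffs b \<in> Fr M \<Longrightarrow> Delta M (a * b) = Delta M a * Delta M b"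
  by (simp add: Delta_def coeffs_times fDelta_fmul Tens_tmul)
lemma Delta_add: "coeffs a \<in> Fr M \<Longrightarrow> coeffs b \<in> Fr M \<Longrightarrow> Delta M (a + b) = Delta M a + Delta M b"
  by (simp add: Delta_def coeffs_plus fDelta_fadd Tens_tadd)
lemma Delta_uminus: "coeffs a \<in> Fr M \<Longrightarrow> Delta M (- a) = - Delta M a"
  by (simp add: Delta_def coeffs_uminus fDelta_fscale uminus_nctensor_def)
lemma Delta_diff: "coeffs a \<in> Fr M \<Longrightarrow> coeffs b \<in> Fr M \<Longrightarrow> Delta M (a - b) = Delta M a - Delta M b"
proof -
  assume a: "coeffs a \<in> Fr M" "coeffs b \<in> Fr M"
  have "coeffs (- b) \<in> Fr M" using a by (simp add: coeffs_uminus)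
  then have "Delta M (a + - b) = Delta M a + - Delta M b" using a by (simp only: Delta_add Delta_uminus)
  then show ?thesis by simp
qed
lemma Delta_1: "Delta M 1 = 1" by (simp add: Delta_def coeffs_1 fDelta_fone Tens_one)
lemma Delta_0: "Delta M 0 = 0" by (simp add: Delta_def coeffs_0 fDelta_fzero Tens_zero)
lemma coeffs_sum_Fr: "finite S \<Longrightarrow> (\<And>i. i \<in> S \<Longrightarrow> coeffs (F i) \<in> Fr M) \<Longrightarrow> coeffs (\<Sum>i\<in>S. F i) \<in> Fr M"
  by (induction S rule: finite_induct) (simp_all add: coeffs_0 coeffs_plus)

lemma Delta_sum: "finite S \<Longrightarrow> (\<And>i. i \<in> S \<Longrightarrow> coeffs (F i) \<in> Fr M) \<Longrightarrow> Delta M (\<Sum>i\<in>S. F i) = (\<Sum>i\<in>S. Delta M (F i))"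
proof (induction S rule: finite_induct)
  case empty then show ?case by (simp add: Delta_0)
next
  case (insert i S)
  have "coeffs (\<Sum>i\<in>S. F i) \<in> Fr M"
    using insert by (simp add: coeffs_sum_Fr)
  then show ?case using insert by (simp add: Delta_add)
qed
lemma Delta_gen: "Delta M (gen b j k) = (\<Sum>l\<in>idx M. tensor (gen b j l) (gen b l k))"
  by (simp add: Delta_def gen_def fDelta_fgen dletter_def Tens_tsumset Tens_ftens)

section \<open>The comultiplication descends to the quotients\<close>


inductive_set tFr :: "nat \<Rightarrow> tel set" for M where
  zero: "(\<lambda>x. 0) \<in> tFr M"
| tensor: "p \<in> Fr M \<Longrightarrow> q \<in> Fr M \<Longrightarrow> ftens p q \<in> tFr M"
| add: "s \<in> tFr M \<Longrightarrow> t \<in> tFr M \<Longrightarrow> tadd s t \<in> tFr M"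
| scale: "s \<in> tFr M \<Longrightarrow> tscale c s \<in> tFr M"

lemma tFr_sum: "finite S \<Longrightarrow> (\<And>i. i \<in> S \<Longrightarrow> F i \<in> tFr M) \<Longrightarrow> (\<lambda>x. \<Sum>i\<in>S. c i * F i x) \<in> tFr M"
proof (induction S rule: finite_induct)
  case empty then show ?case by (simp add: tFr.zero)
next
  case (insert i S)
  have "(\<lambda>x. \<Sum>i\<in>insert i S. c i * F i x) = tadd (tscale (c i) (F i)) (\<lambda>x. \<Sum>i\<in>S. c i * F i x)"
    using insert by (simp add: tadd_def tscale_def)
  then show ?case using insert by (simp add: tFr.add tFr.scale)
qed

lemma tmul_tFr: "s \<in> tFr M \<Longrightarrow> t \<in> tFr M \<Longrightarrow> tmul s t \<in> tFr M"
proof (induction s rule: tFr.induct)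
  case zero then show ?case by (simp add: tensor_alg.mul_zero_left tFr.zero)
next
  case (tensor p q)
  from tensor(3) show ?case
  proof (induction t rule: tFr.induct)
    case zero then show ?case by (simp add: tensor_alg.mul_zero_right tFr.zero)
  next
    case (tensor p' q') then show ?case using \<open>p \<in> Fr M\<close> \<open>q \<in> Fr M\<close> by (simp add: ftens_tmul tFr.tensor)
  next
    case (add s t) then show ?case by (simp add: tadd_def tensor_alg.mul_add_right tFr.add[unfolded tadd_def])
  next
    case (scale s c) then show ?case by (simp add: tscale_def tensor_alg.mul_scale_right tFr.scale[unfolded tscale_def])
  qed
next
  case (add s1 s2) then show ?case by (simp add: tadd_def tensor_alg.mul_add_left tFr.add[unfolded tadd_def])
next
  case (scale s c) then show ?case by (simp add: tscale_def tensor_alg.mul_scale_left tFr.scale[unfolded tscale_def])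
qed

context
  fixes M :: nat and R :: "el set"
  assumes rel_Fr: "R \<subseteq> Fr M"
begin

lemma tmul_tFr_tIdeal: "s \<in> tFr M \<Longrightarrow> t \<in> tIdeal M (starIdeal M R) \<Longrightarrow> tmul s t \<in> tIdeal M (starIdeal M R)"
proof (induction s rule: tFr.induct)
  case zero then show ?case by (simp add: tensor_alg.mul_zero_left tIdeal.zero)
next
  case (tensor p q)
  from tensor(3) show ?case
  proof (induction t rule: tIdeal.induct)
    case zero then show ?case by (simp add: tensor_alg.mul_zero_right tIdeal.zero)
  next
    case (left a q') then show ?case using \<open>p \<in> Fr M\<close> \<open>q \<in> Fr M\<close>
      by (simp add: ftens_tmul tIdeal.left starIdeal.lmul starIdeal_Fr[OF rel_Fr])
  next
    case (right p' a) then show ?case using \<open>p \<in> Fr M\<close> \<open>q \<in> Fr M\<close>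
      by (simp add: ftens_tmul tIdeal.right starIdeal.lmul)
  next
    case (add s t) then show ?case by (simp add: tadd_def tensor_alg.mul_add_right tIdeal.add[unfolded tadd_def])
  next
    case (scale s c) then show ?case by (simp add: tscale_def tensor_alg.mul_scale_right tIdeal.scale[unfolded tscale_def])
  qed
next
  case (add s1 s2) then show ?case by (simp add: tadd_def tensor_alg.mul_add_left tIdeal.add[unfolded tadd_def])
next
  case (scale s c) then show ?case by (simp add: tscale_def tensor_alg.mul_scale_left tIdeal.scale[unfolded tscale_def])
qed

lemma tmul_tIdeal_tFr: "s \<in> tFr M \<Longrightarrow> t \<in> tIdeal M (starIdeal M R) \<Longrightarrow> tmul t s \<in> tIdeal M (starIdeal M R)"
proof (induction s rule: tFr.induct)
  case zero then show ?case by (simp add: tensor_alg.mul_zero_right tIdeal.zero)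
next
  case (tensor p q)
  from tensor(3) show ?case
  proof (induction t rule: tIdeal.induct)
    case zero then show ?case by (simp add: tensor_alg.mul_zero_left tIdeal.zero)
  next
    case (left a q') then show ?case using \<open>p \<in> Fr M\<close> \<open>q \<in> Fr M\<close>
      by (simp add: ftens_tmul tIdeal.left starIdeal.rmul)
  next
    case (right p' a) then show ?case using \<open>p \<in> Fr M\<close> \<open>q \<in> Fr M\<close>
      by (simp add: ftens_tmul tIdeal.right starIdeal.rmul)
  next
    case (add s t) then show ?case by (simp add: tadd_def tensor_alg.mul_add_left tIdeal.add[unfolded tadd_def])
  next
    case (scale s c) then show ?case by (simp add: tscale_def tensor_alg.mul_scale_left tIdeal.scale[unfolded tscale_def])
  qed
next
  case (add s1 s2) then show ?case by (simp add: tadd_def tensor_alg.mul_add_right tIdeal.add[unfolded tadd_def])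
next
  case (scale s c) then show ?case by (simp add: tscale_def tensor_alg.mul_scale_right tIdeal.scale[unfolded tscale_def])
qed

lemma tstar_tIdeal: "t \<in> tIdeal M (starIdeal M R) \<Longrightarrow> tstar t \<in> tIdeal M (starIdeal M R)"
proof (induction t rule: tIdeal.induct)
  case zero then show ?case using tensor_alg.adj_zero by (simp add: tIdeal.zero)
next
  case (left a q) then show ?case by (simp add: tstar_ftens tIdeal.left starIdeal.star)
next
  case (right p a) then show ?case by (simp add: tstar_ftens tIdeal.right starIdeal.star)
next
  case (add s t) then show ?case by (simp add: tadd_def tensor_alg.adj_add tIdeal.add[unfolded tadd_def])
next
  case (scale s c) then show ?case by (simp add: tscale_def tensor_alg.adj_scale tIdeal.scale[unfolded tscale_def])
qed

end

lemma dletter_tFr: "y \<in> letters M \<Longrightarrow> dletter M y \<in> tFr M"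
proof -
  assume y: "y \<in> letters M"
  obtain j k b where jkb: "y = (j,k,b)" by (cases y)
  have "dletter M y = (\<lambda>x. \<Sum>l\<in>idx M. 1 * ftens (fgen (j,l,b)) (fgen (l,k,b)) x)"
    by (simp add: jkb dletter_def tsumset_def)
  also have "\<dots> \<in> tFr M"
    using y by (intro tFr_sum) (auto simp: jkb letters_def idx_def intro!: tFr.tensor fgen_Fr)
  finally show ?thesis .
qed

lemma dword_tFr: "set w \<subseteq> letters M \<Longrightarrow> dword M w \<in> tFr M"
  by (induction w) (auto intro: tFr.tensor tmul_tFr dletter_tFr)

lemma fDelta_tFr: "f \<in> Fr M \<Longrightarrow> fDelta M f \<in> tFr M"
  unfolding fDelta_def by (rule tFr_sum) (auto simp: Fr_def dword_tFr)

lemma fDelta_starIdeal: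
  assumes rel_Fr: "R \<subseteq> Fr M" and G0: "\<And>r. r \<in> R \<Longrightarrow> fDelta M r \<in> tIdeal M (starIdeal M R)"
  shows "a \<in> starIdeal M R \<Longrightarrow> fDelta M a \<in> tIdeal M (starIdeal M R)"
proof (induction rule: starIdeal.induct)
  case (gen r) then show ?case by (rule G0)
next
  case zero then show ?case by (simp add: fDelta_fzero tIdeal.zero)
next
  case (add a b) then show ?case
    by (simp add: fDelta_fadd starIdeal_Fr[OF rel_Fr] tIdeal.add)
next
  case (scale a c) then show ?case
    by (simp add: fDelta_fscale starIdeal_Fr[OF rel_Fr] tIdeal.scale)
next
  case (lmul x a) then show ?case
    by (simp add: fDelta_fmul starIdeal_Fr[OF rel_Fr] tmul_tFr_tIdeal[OF rel_Fr] fDelta_tFr)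
next
  case (rmul a x) then show ?case
    by (simp add: fDelta_fmul starIdeal_Fr[OF rel_Fr] tmul_tIdeal_tFr[OF rel_Fr] fDelta_tFr)
next
  case (star a) then show ?case
    by (simp add: fDelta_fstar starIdeal_Fr[OF rel_Fr] tstar_tIdeal[OF rel_Fr])
qed

lemma tcls_eq_if_tsub:
  assumes "tsub t t' \<in> tIdeal M I" shows "tcls M I t = tcls M I t'"
proof -
  have "tsub t s \<in> tIdeal M I \<longleftrightarrow> tsub t' s \<in> tIdeal M I" for s
  proof
    assume "tsub t s \<in> tIdeal M I"
    moreover have "tsub t' s = tadd (tsub t s) (tscale (-1) (tsub t t'))"
      by (simp add: tsub_def tadd_def tscale_def fun_eq_iff)
    ultimately show "tsub t' s \<in> tIdeal M I" using assms by (simp add: tIdeal.add tIdeal.scale)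
  next
    assume "tsub t' s \<in> tIdeal M I"
    moreover have "tsub t s = tadd (tsub t t') (tsub t' s)"
      by (simp add: tsub_def tadd_def fun_eq_iff)
    ultimately show "tsub t s \<in> tIdeal M I" using assms by (simp add: tIdeal.add)
  qed
  then show ?thesis by (simp add: tcls_def)
qed

lemma qDelta_cls:
  assumes rel_Fr: "R \<subseteq> Fr M" and Delta_rel: "\<And>r. r \<in> R \<Longrightarrow> fDelta M r \<in> tIdeal M (starIdeal M R)"
    and p: "p \<in> Fr M"
  shows "qDelta M (starIdeal M R) (cls M (starIdeal M R) p) = tcls M (starIdeal M R) (fDelta M p)"
proof -
  have "tcls M (starIdeal M R) (fDelta M q) = tcls M (starIdeal M R) (fDelta M p)"
    if q: "q \<in> cls M (starIdeal M R) p" for q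
  proof (rule tcls_eq_if_tsub)
    have q1: "q \<in> Fr M" "fsub p q \<in> starIdeal M R" using q by (auto simp: cls_def)
    have "tsub (fDelta M q) (fDelta M p) = tscale (-1) (fDelta M (fsub p q))"
      using p q1 by (simp add: fsub_eq fDelta_fadd fDelta_fscale tsub_def tadd_def tscale_def fun_eq_iff)
    then show "tsub (fDelta M q) (fDelta M p) \<in> tIdeal M (starIdeal M R)"
      using fDelta_starIdeal[OF rel_Fr Delta_rel q1(2)] by (simp add: tIdeal.scale)
  qed
  then have "qDelta M (starIdeal M R) (cls M (starIdeal M R) p) = (\<Union>q\<in>cls M (starIdeal M R) p. tcls M (starIdeal M R) (fDelta M p))"
    unfolding qDelta_def by (rule SUP_cong[OF refl])
  then show ?thesis using cls_self[OF rel_Fr p] by auto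
qed

definition in_Fr :: "nat \<Rightarrow> ncpoly \<Rightarrow> bool" where "in_Fr M a \<longleftrightarrow> coeffs a \<in> Fr M"

lemma in_Fr_simps[simp]:
  "in_Fr M 0" "in_Fr M 1"
  "in_Fr M a \<Longrightarrow> in_Fr M b \<Longrightarrow> in_Fr M (a + b)"
  "in_Fr M a \<Longrightarrow> in_Fr M b \<Longrightarrow> in_Fr M (a - b)"
  "in_Fr M a \<Longrightarrow> in_Fr M b \<Longrightarrow> in_Fr M (a * b)"
  "in_Fr M a \<Longrightarrow> in_Fr M (- a)"
  "in_Fr M (scal c)"
  "j \<in> idx M \<Longrightarrow> k \<in> idx M \<Longrightarrow> in_Fr M (gen bb j k)"
  "in_Fr M a \<Longrightarrow> in_Fr M (padj a)"
  by (simp_all add: in_Fr_def coeffs_0 coeffs_1 coeffs_plus coeffs_minus coeffs_times coeffs_uminus scal_def gen_Fr padj_def)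

lemma in_Fr_sum[simp]: "finite S \<Longrightarrow> (\<And>i. i \<in> S \<Longrightarrow> in_Fr M (F i)) \<Longrightarrow> in_Fr M (\<Sum>i\<in>S. F i)"
  by (induction S rule: finite_induct) simp_all

lemma finite_idx[simp]: "finite (idx M)" by (simp add: idx_def)

definition tideal :: "nat \<Rightarrow> el set \<Rightarrow> nctensor set" where "tideal M I = Tens ` tIdeal M I"

lemma tideal_iff: "Tens t \<in> tideal M I \<longleftrightarrow> t \<in> tIdeal M I"
  by (auto simp: tideal_def)

lemma tideal_0[simp]: "0 \<in> tideal M I" by (simp add: tideal_def zero_nctensor_def tIdeal.zero)
lemma tideal_add[simp]: "a \<in> tideal M I \<Longrightarrow> b \<in> tideal M I \<Longrightarrow> a + b \<in> tideal M I"
  by (auto simp: tideal_def plus_nctensor_def intro: tIdeal.add)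
lemma tideal_uminus[simp]: "a \<in> tideal M I \<Longrightarrow> - a \<in> tideal M I"
  by (auto simp: tideal_def uminus_nctensor_def intro: tIdeal.scale)
lemma tideal_sum[simp]: "finite S \<Longrightarrow> (\<And>i. i \<in> S \<Longrightarrow> F i \<in> tideal M I) \<Longrightarrow> (\<Sum>i\<in>S. F i) \<in> tideal M I"
  by (induction S rule: finite_induct) simp_all
lemma tideal_tensor_right: "in_Fr M x \<Longrightarrow> coeffs r \<in> I \<Longrightarrow> tensor x r \<in> tideal M I"
  by (auto simp: tideal_def tensor_def in_Fr_def intro!: tIdeal.right)
lemma tideal_tensor_left: "in_Fr M x \<Longrightarrow> coeffs r \<in> I \<Longrightarrow> tensor r x \<in> tideal M I"
  by (auto simp: tideal_def tensor_def in_Fr_def intro!: tIdeal.left)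

definition kron :: "nat \<Rightarrow> nat \<Rightarrow> ncpoly" where "kron j k = (if j = k then 1 else 0)"

lemma in_Fr_kron[simp]: "in_Fr M (kron j k)" by (simp add: kron_def)

definition tscal :: "complex \<Rightarrow> nctensor" where "tscal c = tensor (scal c) 1"

lemma Delta_scal: "Delta M (scal c) = tscal c"
proof -
  have "Delta M (scal c) = Tens (tscale c (ftens fone fone))"
    by (simp add: Delta_def scal_def fDelta_fscale[OF fone_Fr] fDelta_fone)
  also have "\<dots> = tscal c"
    by (simp add: tscal_def tensor_def scal_def coeffs_1 tscale_def ftens_def fscale_def split_beta fun_eq_iff)
  finally show ?thesis .
qed

lemma Delta_kron: "Delta M (kron j k) = tensor (kron j k) 1"
  by (simp add: kron_def Delta_1 Delta_0 tensor_1 tensor_0_left)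

lemma tensor_scal_left: "tensor (scal c * a) b = tscal c * tensor a b"
  by (simp add: tscal_def tensor_mult)
lemma tensor_scal_right: "tensor a (scal c * b) = tscal c * tensor a b"
proof -
  have "tensor a (scal c * b) = Tens (ftens (coeffs a) (fscale c (coeffs b)))"
    by (simp add: tensor_def times_ncpoly_def scal_def fmul_fscale_left fmul_fone_left)
  also have "\<dots> = Tens (ftens (fscale c (coeffs a)) (coeffs b))"
    by (simp add: ftens_def fscale_def fun_eq_iff split_beta mult_ac)
  also have "\<dots> = tensor (scal c * a) b"
    by (simp add: tensor_def times_ncpoly_def scal_def fmul_fscale_left fmul_fone_left)
  finally show ?thesis by (simp add: tensor_scal_left)
qed
lemma tscal_mult: "tscal a * tscal b = tscal (a * b)"
  by (simp add: tscal_def tensor_mult scal_mult)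

(* gen False j k is u_jk and gen True j k is u_jk^*. For X, Y among U and Ubar, row_rel and
   col_rel are the (j,k) entries of X Y^T - 1 and X^T Y - 1. *)
definition row_rel :: "nat \<Rightarrow> bool \<Rightarrow> bool \<Rightarrow> nat \<Rightarrow> nat \<Rightarrow> ncpoly" where
  "row_rel M b1 b2 j k = (\<Sum>l\<in>idx M. gen b1 j l * gen b2 k l) - kron j k"
definition col_rel :: "nat \<Rightarrow> bool \<Rightarrow> bool \<Rightarrow> nat \<Rightarrow> nat \<Rightarrow> ncpoly" where
  "col_rel M b1 b2 j k = (\<Sum>l\<in>idx M. gen b1 l j * gen b2 l k) - kron j k"

lemma in_Fr_row_rel[simp]: "j \<in> idx M \<Longrightarrow> k \<in> idx M \<Longrightarrow> in_Fr M (row_rel M b1 b2 j k)" by (simp add: row_rel_def)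
lemma in_Fr_col_rel[simp]: "j \<in> idx M \<Longrightarrow> k \<in> idx M \<Longrightarrow> in_Fr M (col_rel M b1 b2 j k)" by (simp add: col_rel_def)

lemma sum_kron_right: "a \<in> S \<Longrightarrow> finite S \<Longrightarrow> (\<Sum>c\<in>S. tensor (X c) (kron a c)) = tensor (X a) 1"
proof -
  assume a: "a \<in> S" "finite S"
  have "(\<Sum>c\<in>S. tensor (X c) (kron a c)) = (\<Sum>c\<in>S. if a = c then tensor (X c) 1 else 0)"
    by (rule sum.cong) (auto simp: kron_def tensor_0_right)
  then show ?thesis using a by simp
qed

lemma sum_kron_left: "a \<in> S \<Longrightarrow> finite S \<Longrightarrow> (\<Sum>c\<in>S. tensor (kron a c) (X c)) = tensor 1 (X a)"
proof -
  assume a: "a \<in> S" "finite S"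
  have "(\<Sum>c\<in>S. tensor (kron a c) (X c)) = (\<Sum>c\<in>S. if a = c then tensor 1 (X c) else 0)"
    by (rule sum.cong) (auto simp: kron_def tensor_0_left)
  then show ?thesis using a by simp
qed

lemma sum_rotate3: "(\<Sum>l\<in>I. \<Sum>a\<in>A. \<Sum>c\<in>C. F l a c) = (\<Sum>a\<in>A. \<Sum>c\<in>C. \<Sum>l\<in>I. F l a c)"
  by (subst sum.swap) (rule sum.cong[OF refl], rule sum.swap)

lemma Delta_row_rel:
  assumes j: "j \<in> idx M" and k: "k \<in> idx M"
  shows "Delta M (row_rel M b1 b2 j k) =
    (\<Sum>a\<in>idx M. \<Sum>c\<in>idx M. tensor (gen b1 j a * gen b2 k c) (row_rel M b1 b2 a c)) + tensor (row_rel M b1 b2 j k) 1"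
proof -
  let ?X = "\<lambda>a c. gen b1 j a * gen b2 k c"
  have "Delta M (\<Sum>l\<in>idx M. gen b1 j l * gen b2 k l) = (\<Sum>l\<in>idx M. Delta M (gen b1 j l) * Delta M (gen b2 k l))"
    using j k by (simp add: Delta_sum Delta_mult in_Fr_def[symmetric])
  also have "\<dots> = (\<Sum>l\<in>idx M. \<Sum>a\<in>idx M. \<Sum>c\<in>idx M. tensor (?X a c) (gen b1 a l * gen b2 c l))"
    by (simp add: Delta_gen sum_distrib_left sum_distrib_right tensor_mult) (rule sum.cong[OF refl], rule sum.swap)
  also have "\<dots> = (\<Sum>a\<in>idx M. \<Sum>c\<in>idx M. tensor (?X a c) (\<Sum>l\<in>idx M. gen b1 a l * gen b2 c l))"
    by (subst sum_rotate3) (simp only: tensor_sum_right)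
  also have "\<dots> = (\<Sum>a\<in>idx M. \<Sum>c\<in>idx M. tensor (?X a c) (row_rel M b1 b2 a c) + tensor (?X a c) (kron a c))"
    by (simp add: row_rel_def tensor_add_right[symmetric])
  also have "\<dots> = (\<Sum>a\<in>idx M. \<Sum>c\<in>idx M. tensor (?X a c) (row_rel M b1 b2 a c)) + (\<Sum>a\<in>idx M. tensor (?X a a) 1)"
    by (simp add: sum.distrib sum_kron_right)
  also have "(\<Sum>a\<in>idx M. tensor (?X a a) 1) = tensor (row_rel M b1 b2 j k) 1 + tensor (kron j k) 1"
    by (simp add: tensor_sum_left[symmetric] tensor_add_left[symmetric] row_rel_def)
  finally have Delta_sum_part: "Delta M (\<Sum>l\<in>idx M. gen b1 j l * gen b2 k l) =
     (\<Sum>a\<in>idx M. \<Sum>c\<in>idx M. tensor (?X a c) (row_rel M b1 b2 a c)) + tensor (row_rel M b1 b2 j k) 1 + tensor (kron j k) 1"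
    by (simp add: add.assoc)
  show ?thesis
    unfolding row_rel_def[of M b1 b2 j k]
    by (subst Delta_diff) (simp_all add: in_Fr_def[symmetric] j k Delta_sum_part Delta_kron row_rel_def)
qed

lemma Delta_col_rel:
  assumes j: "j \<in> idx M" and k: "k \<in> idx M"
  shows "Delta M (col_rel M b1 b2 j k) =
    (\<Sum>a\<in>idx M. \<Sum>c\<in>idx M. tensor (col_rel M b1 b2 a c) (gen b1 a j * gen b2 c k)) + tensor 1 (col_rel M b1 b2 j k)"
proof -
  let ?Y = "\<lambda>a c. gen b1 a j * gen b2 c k"
  have "Delta M (\<Sum>l\<in>idx M. gen b1 l j * gen b2 l k) = (\<Sum>l\<in>idx M. Delta M (gen b1 l j) * Delta M (gen b2 l k))"
    using j k by (simp add: Delta_sum Delta_mult in_Fr_def[symmetric])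
  also have "\<dots> = (\<Sum>l\<in>idx M. \<Sum>a\<in>idx M. \<Sum>c\<in>idx M. tensor (gen b1 l a * gen b2 l c) (?Y a c))"
    by (simp add: Delta_gen sum_distrib_left sum_distrib_right tensor_mult) (rule sum.cong[OF refl], rule sum.swap)
  also have "\<dots> = (\<Sum>a\<in>idx M. \<Sum>c\<in>idx M. tensor (\<Sum>l\<in>idx M. gen b1 l a * gen b2 l c) (?Y a c))"
    by (subst sum_rotate3) (simp only: tensor_sum_left)
  also have "\<dots> = (\<Sum>a\<in>idx M. \<Sum>c\<in>idx M. tensor (col_rel M b1 b2 a c) (?Y a c) + tensor (kron a c) (?Y a c))"
    by (simp add: col_rel_def tensor_add_left[symmetric])
  also have "\<dots> = (\<Sum>a\<in>idx M. \<Sum>c\<in>idx M. tensor (col_rel M b1 b2 a c) (?Y a c)) + (\<Sum>a\<in>idx M. tensor 1 (?Y a a))"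
    by (simp add: sum.distrib sum_kron_left)
  also have "(\<Sum>a\<in>idx M. tensor 1 (?Y a a)) = tensor 1 (col_rel M b1 b2 j k) + tensor 1 (kron j k)"
    by (simp add: tensor_sum_right[symmetric] tensor_add_right[symmetric] col_rel_def)
  finally have Delta_sum_part: "Delta M (\<Sum>l\<in>idx M. gen b1 l j * gen b2 l k) =
     (\<Sum>a\<in>idx M. \<Sum>c\<in>idx M. tensor (col_rel M b1 b2 a c) (?Y a c)) + tensor 1 (col_rel M b1 b2 j k) + tensor 1 (kron j k)"
    by (simp add: add.assoc)
  have kron_swap: "tensor 1 (kron j k) = tensor (kron j k) 1" by (simp add: kron_def tensor_0_left tensor_0_right)
  show ?thesis
    unfolding col_rel_def[of M b1 b2 j k]
    by (subst Delta_diff) (simp_all add: in_Fr_def[symmetric] j k Delta_sum_part Delta_kron kron_swap col_rel_def)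
qed

lemma Delta_row_rel_tideal:
  assumes "\<And>a c. a \<in> idx M \<Longrightarrow> c \<in> idx M \<Longrightarrow> coeffs (row_rel M b1 b2 a c) \<in> I"
    and "j \<in> idx M" "k \<in> idx M"
  shows "Delta M (row_rel M b1 b2 j k) \<in> tideal M I"
  using assms by (simp add: Delta_row_rel tideal_tensor_right tideal_tensor_left)

lemma Delta_col_rel_tideal:
  assumes "\<And>a c. a \<in> idx M \<Longrightarrow> c \<in> idx M \<Longrightarrow> coeffs (col_rel M b1 b2 a c) \<in> I"
    and "j \<in> idx M" "k \<in> idx M"
  shows "Delta M (col_rel M b1 b2 j k) \<in> tideal M I"
  using assms by (simp add: Delta_col_rel tideal_tensor_right tideal_tensor_left)

definition Jperm :: "nat \<Rightarrow> nat \<Rightarrow> nat" where "Jperm M j = (if j \<le> M then j + M else j - M)"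
definition Jsign :: "nat \<Rightarrow> nat \<Rightarrow> complex" where "Jsign M j = (if j \<le> M then 1 else -1)"

lemma Jperm_idx: "j \<in> idx M \<Longrightarrow> Jperm M j \<in> idx M" by (auto simp: Jperm_def idx_def)
lemma Jperm_Jperm: "j \<in> idx M \<Longrightarrow> Jperm M (Jperm M j) = j" by (auto simp: Jperm_def idx_def)
lemma Jperm_bij: "bij_betw (Jperm M) (idx M) (idx M)"
  by (rule bij_betw_byWitness[where f' = "Jperm M"]) (auto simp: Jperm_idx Jperm_Jperm)

lemma Jm_Jperm: "j \<in> idx M \<Longrightarrow> a \<in> idx M \<Longrightarrow> Jm M j a = (if a = Jperm M j then Jsign M j else 0)"
  by (auto simp: Jm_def Jperm_def Jsign_def idx_def)

definition J_rel :: "nat \<Rightarrow> nat \<Rightarrow> nat \<Rightarrow> ncpoly" where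
  "J_rel M j k = gen False j k - scal (Jsign M j * Jsign M k) * gen True (Jperm M j) (Jperm M k)"

lemma in_Fr_J_rel[simp]: "j \<in> idx M \<Longrightarrow> k \<in> idx M \<Longrightarrow> in_Fr M (J_rel M j k)"
  by (simp add: J_rel_def Jperm_idx)

lemma Poly_u: "Poly (u j k) = gen False j k" by (simp add: u_def gen_def)
lemma Poly_us: "Poly (us j k) = gen True j k" by (simp add: us_def gen_def)
lemma scal_delta: "scal (delta j k) = kron j k" by (simp add: delta_def kron_def)

lemma Poly_relJ_term:
  assumes j: "j \<in> idx M" and k: "k \<in> idx M" and ab: "a \<in> idx M" "b \<in> idx M"
  shows "Poly (fscale (Jm M j a * Jinv M b k) (us a b)) =
     (if (a,b) = (Jperm M j, Jperm M k) then scal (Jsign M j * Jsign M k) * gen True (Jperm M j) (Jperm M k) else 0)"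
  using j k ab by (cases "a = Jperm M j"; cases "b = Jperm M k") (simp_all add: Poly_fscale Poly_us Jinv_def Jm_Jperm)

lemma Poly_relJ:
  assumes j: "j \<in> idx M" and k: "k \<in> idx M"
  shows "Poly (fsub (u j k) (fsumset (idx M \<times> idx M) (\<lambda>(a,b). fscale (Jm M j a * Jinv M b k) (us a b)))) = J_rel M j k"
proof -
  have "Poly (fsumset (idx M \<times> idx M) (\<lambda>(a,b). fscale (Jm M j a * Jinv M b k) (us a b)))
      = (\<Sum>p\<in>idx M \<times> idx M. Poly ((\<lambda>(a,b). fscale (Jm M j a * Jinv M b k) (us a b)) p))"
    by (rule Poly_fsumset)
  also have "\<dots> = (\<Sum>p\<in>idx M \<times> idx M. if p = (Jperm M j, Jperm M k) then scal (Jsign M j * Jsign M k) * gen True (Jperm M j) (Jperm M k) else 0)"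
    by (rule sum.cong) (auto simp: Poly_relJ_term j k split: if_splits)
  also have "\<dots> = scal (Jsign M j * Jsign M k) * gen True (Jperm M j) (Jperm M k)"
    using j k by (simp add: Jperm_idx)
  finally show ?thesis by (simp add: Poly_fsub Poly_u J_rel_def)
qed

lemma Delta_gen_Jperm_reindex:
  assumes j: "j \<in> idx M" and k: "k \<in> idx M"
  shows "(\<Sum>l\<in>idx M. tensor (gen True (Jperm M j) (Jperm M l)) (gen True (Jperm M l) (Jperm M k))) = Delta M (gen True (Jperm M j) (Jperm M k))"
  unfolding Delta_gen
  by (rule sum.reindex_bij_betw[OF Jperm_bij, where g = "\<lambda>l. tensor (gen True (Jperm M j) l) (gen True l (Jperm M k))"])

lemma tensor_gen_False_J_rel_expansion:
  "tensor (gen False j l) (gen False l k) =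
      tensor (J_rel M j l) (gen False l k)
      + tensor (scal (Jsign M j * Jsign M l) * gen True (Jperm M j) (Jperm M l)) (J_rel M l k)
      + tscal (Jsign M j * Jsign M k) * tensor (gen True (Jperm M j) (Jperm M l)) (gen True (Jperm M l) (Jperm M k))"
proof -
  let ?A = "scal (Jsign M j * Jsign M l) * gen True (Jperm M j) (Jperm M l)"
  let ?B = "scal (Jsign M l * Jsign M k) * gen True (Jperm M l) (Jperm M k)"
  let ?c = "Jsign M j * Jsign M k"
  have "Jsign M l * Jsign M k * (Jsign M j * Jsign M l) = ?c"
    by (auto simp: Jsign_def)
  then have signs: "tscal (Jsign M l * Jsign M k) * tscal (Jsign M j * Jsign M l) = tscal ?c"
    by (simp only: tscal_mult)
  have "tensor ?A ?B = tscal (Jsign M l * Jsign M k) *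
      (tscal (Jsign M j * Jsign M l) * tensor (gen True (Jperm M j) (Jperm M l)) (gen True (Jperm M l) (Jperm M k)))"
    by (simp only: tensor_scal_left tensor_scal_right)
  then have AB: "tensor ?A ?B = tscal ?c * tensor (gen True (Jperm M j) (Jperm M l)) (gen True (Jperm M l) (Jperm M k))"
    by (simp only: mult.assoc[symmetric] signs)
  have "tensor (gen False j l) (gen False l k) = tensor (J_rel M j l) (gen False l k) + tensor ?A (gen False l k)"
    by (simp add: J_rel_def tensor_add_left[symmetric])
  also have "tensor ?A (gen False l k) = tensor ?A (J_rel M l k) + tensor ?A ?B"
    by (simp add: J_rel_def tensor_add_right[symmetric])
  finally show ?thesis by (simp add: AB add.assoc)
qed

lemma Delta_J_rel:
  assumes j: "j \<in> idx M" and k: "k \<in> idx M"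
  shows "Delta M (J_rel M j k) = (\<Sum>l\<in>idx M. tensor (J_rel M j l) (gen False l k))
            + (\<Sum>l\<in>idx M. tensor (scal (Jsign M j * Jsign M l) * gen True (Jperm M j) (Jperm M l)) (J_rel M l k))"
proof -
  let ?c = "Jsign M j * Jsign M k"
  have reindex: "(\<Sum>l\<in>idx M. tscal ?c * tensor (gen True (Jperm M j) (Jperm M l)) (gen True (Jperm M l) (Jperm M k)))
        = tscal ?c * Delta M (gen True (Jperm M j) (Jperm M k))"
    by (simp only: sum_distrib_left[symmetric] Delta_gen_Jperm_reindex[OF j k])
  have "Delta M (gen False j k) = (\<Sum>l\<in>idx M. tensor (J_rel M j l) (gen False l k))
       + (\<Sum>l\<in>idx M. tensor (scal (Jsign M j * Jsign M l) * gen True (Jperm M j) (Jperm M l)) (J_rel M l k))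
       + tscal ?c * Delta M (gen True (Jperm M j) (Jperm M k))"
    by (simp only: Delta_gen[of M False j k] tensor_gen_False_J_rel_expansion[where M = M] sum.distrib reindex)
  moreover have "Delta M (scal ?c * gen True (Jperm M j) (Jperm M k)) = tscal ?c * Delta M (gen True (Jperm M j) (Jperm M k))"
    using j k by (simp add: Delta_mult in_Fr_def[symmetric] Jperm_idx Delta_scal)
  ultimately show ?thesis
    unfolding J_rel_def[of M j k]
    by (subst Delta_diff) (simp_all add: in_Fr_def[symmetric] j k Jperm_idx)
qed

lemma Delta_J_rel_tideal:
  assumes "\<And>a c. a \<in> idx M \<Longrightarrow> c \<in> idx M \<Longrightarrow> coeffs (J_rel M a c) \<in> I"
    and "j \<in> idx M" "k \<in> idx M"
  shows "Delta M (J_rel M j k) \<in> tideal M I"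
  using assms by (simp add: Delta_J_rel tideal_tensor_right tideal_tensor_left Jperm_idx)

lemma Poly_relU_row: "Poly (fsub (fsumset (idx M) (\<lambda>l. fmul (u j l) (us k l))) (fscale (delta j k) fone)) = row_rel M False True j k"
  by (simp add: Poly_fsub Poly_fsumset Poly_fmul Poly_fscale Poly_fone Poly_u Poly_us scal_delta row_rel_def)
lemma Poly_relU_col: "Poly (fsub (fsumset (idx M) (\<lambda>l. fmul (us l j) (u l k))) (fscale (delta j k) fone)) = col_rel M True False j k"
  by (simp add: Poly_fsub Poly_fsumset Poly_fmul Poly_fscale Poly_fone Poly_u Poly_us scal_delta col_rel_def)
lemma Poly_relUbar_row: "Poly (fsub (fsumset (idx M) (\<lambda>l. fmul (us j l) (u k l))) (fscale (delta j k) fone)) = row_rel M True False j k"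
  by (simp add: Poly_fsub Poly_fsumset Poly_fmul Poly_fscale Poly_fone Poly_u Poly_us scal_delta row_rel_def)
lemma Poly_relUbar_col: "Poly (fsub (fsumset (idx M) (\<lambda>l. fmul (u l j) (us l k))) (fscale (delta j k) fone)) = col_rel M False True j k"
  by (simp add: Poly_fsub Poly_fsumset Poly_fmul Poly_fscale Poly_fone Poly_u Poly_us scal_delta col_rel_def)

lemma relU_row_coeffs: "coeffs (row_rel M False True j k) = fsub (fsumset (idx M) (\<lambda>l. fmul (u j l) (us k l))) (fscale (delta j k) fone)"
  by (simp only: Poly_relU_row[symmetric] ncpoly.sel)
lemma relU_col_coeffs: "coeffs (col_rel M True False j k) = fsub (fsumset (idx M) (\<lambda>l. fmul (us l j) (u l k))) (fscale (delta j k) fone)"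
  by (simp only: Poly_relU_col[symmetric] ncpoly.sel)
lemma relUbar_row_coeffs: "coeffs (row_rel M True False j k) = fsub (fsumset (idx M) (\<lambda>l. fmul (us j l) (u k l))) (fscale (delta j k) fone)"
  by (simp only: Poly_relUbar_row[symmetric] ncpoly.sel)
lemma relUbar_col_coeffs: "coeffs (col_rel M False True j k) = fsub (fsumset (idx M) (\<lambda>l. fmul (u l j) (us l k))) (fscale (delta j k) fone)"
  by (simp only: Poly_relUbar_col[symmetric] ncpoly.sel)
lemma relJ_coeffs: "j \<in> idx M \<Longrightarrow> k \<in> idx M \<Longrightarrow>
  coeffs (J_rel M j k) = fsub (u j k) (fsumset (idx M \<times> idx M) (\<lambda>(a,b). fscale (Jm M j a * Jinv M b k) (us a b)))"
  by (simp only: Poly_relJ[symmetric] ncpoly.sel)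

lemma relU_cases:
  "r \<in> relU M \<Longrightarrow> \<exists>j\<in>idx M. \<exists>k\<in>idx M. r = coeffs (row_rel M False True j k) \<or> r = coeffs (col_rel M True False j k)
      \<or> r = coeffs (row_rel M True False j k) \<or> r = coeffs (col_rel M False True j k)"
  unfolding relU_def relUnitary_def relUbarUnitary_def relU_row_coeffs relU_col_coeffs relUbar_row_coeffs relUbar_col_coeffs
  by blast

lemma relO_cases:
  assumes r: "r \<in> relO M"
  shows "\<exists>j\<in>idx M. \<exists>k\<in>idx M. r = coeffs (row_rel M False True j k) \<or> r = coeffs (col_rel M True False j k)
      \<or> r = coeffs (J_rel M j k)"
proof -
  from r have "r \<in> relUnitary M \<or> r \<in> relJ M" by (simp add: relO_def)
  then show ?thesis
  proof
    assume "r \<in> relUnitary M" then show ?thesis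
      unfolding relUnitary_def relU_row_coeffs relU_col_coeffs by blast
  next
    assume "r \<in> relJ M"
    then obtain j k where jk: "j \<in> idx M" "k \<in> idx M"
      "r = fsub (u j k) (fsumset (idx M \<times> idx M) (\<lambda>(a,b). fscale (Jm M j a * Jinv M b k) (us a b)))"
      unfolding relJ_def by blast
    then have "r = coeffs (J_rel M j k)" by (simp add: relJ_coeffs)
    with jk show ?thesis by blast
  qed
qed

lemma relU_mem:
  assumes "j \<in> idx M" "k \<in> idx M"
  shows "coeffs (row_rel M False True j k) \<in> relU M" "coeffs (col_rel M True False j k) \<in> relU M"
        "coeffs (row_rel M True False j k) \<in> relU M" "coeffs (col_rel M False True j k) \<in> relU M"
  unfolding relU_def relUnitary_def relUbarUnitary_def relU_row_coeffs relU_col_coeffs relUbar_row_coeffs relUbar_col_coeffs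
  using assms by blast+

lemma relO_mem:
  assumes "j \<in> idx M" "k \<in> idx M"
  shows "coeffs (row_rel M False True j k) \<in> relO M" "coeffs (col_rel M True False j k) \<in> relO M"
        "coeffs (J_rel M j k) \<in> relO M"
  unfolding relO_def relUnitary_def relJ_def relU_row_coeffs relU_col_coeffs relJ_coeffs[OF assms]
  using assms by blast+

lemma relU_Fr: "relU M \<subseteq> Fr M"
proof
  fix r assume "r \<in> relU M"
  from relU_cases[OF this] obtain j k where jk: "j \<in> idx M" "k \<in> idx M"
    "r = coeffs (row_rel M False True j k) \<or> r = coeffs (col_rel M True False j k) \<or> r = coeffs (row_rel M True False j k) \<or> r = coeffs (col_rel M False True j k)"
    by blast
  from jk(3) show "r \<in> Fr M" by (elim disjE) (simp_all add: in_Fr_def[symmetric] jk(1,2))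
qed
lemma relO_Fr: "relO M \<subseteq> Fr M"
proof
  fix r assume "r \<in> relO M"
  from relO_cases[OF this] obtain j k where jk: "j \<in> idx M" "k \<in> idx M"
    "r = coeffs (row_rel M False True j k) \<or> r = coeffs (col_rel M True False j k) \<or> r = coeffs (J_rel M j k)"
    by blast
  from jk(3) show "r \<in> Fr M" by (elim disjE) (simp_all add: in_Fr_def[symmetric] jk(1,2))
qed

lemma fDelta_tideal: "fDelta M r \<in> tIdeal M I \<longleftrightarrow> Delta M (Poly r) \<in> tideal M I"
  by (simp add: Delta_def tideal_iff)

lemma Delta_relU: "r \<in> relU M \<Longrightarrow> fDelta M r \<in> tIdeal M (IU M)"
proof -
  assume r: "r \<in> relU M"
  have mem: "\<And>a c. a \<in> idx M \<Longrightarrow> c \<in> idx M \<Longrightarrow>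
     coeffs (row_rel M False True a c) \<in> IU M \<and> coeffs (col_rel M True False a c) \<in> IU M \<and>
     coeffs (row_rel M True False a c) \<in> IU M \<and> coeffs (col_rel M False True a c) \<in> IU M"
    by (simp add: IU_def relU_mem starIdeal.gen)
  from relU_cases[OF r] obtain j k where jk: "j \<in> idx M" "k \<in> idx M"
    "r = coeffs (row_rel M False True j k) \<or> r = coeffs (col_rel M True False j k) \<or> r = coeffs (row_rel M True False j k) \<or> r = coeffs (col_rel M False True j k)"
    by blast
  then show ?thesis
    unfolding fDelta_tideal using mem
    by (elim disjE) (simp_all add: Delta_row_rel_tideal[of M] Delta_col_rel_tideal[of M])
qed

lemma Delta_relO: "r \<in> relO M \<Longrightarrow> fDelta M r \<in> tIdeal M (IO M)"
proof -
  assume r: "r \<in> relO M"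
  have mem: "\<And>a c. a \<in> idx M \<Longrightarrow> c \<in> idx M \<Longrightarrow>
     coeffs (row_rel M False True a c) \<in> IO M \<and> coeffs (col_rel M True False a c) \<in> IO M \<and> coeffs (J_rel M a c) \<in> IO M"
    by (simp add: IO_def relO_mem starIdeal.gen)
  from relO_cases[OF r] obtain j k where jk: "j \<in> idx M" "k \<in> idx M"
    "r = coeffs (row_rel M False True j k) \<or> r = coeffs (col_rel M True False j k) \<or> r = coeffs (J_rel M j k)"
    by blast
  then show ?thesis
    unfolding fDelta_tideal using mem
    by (elim disjE) (simp_all add: Delta_row_rel_tideal Delta_col_rel_tideal Delta_J_rel_tideal)
qed

section \<open>The relations of U_2M^+ hold in O_J^+\<close>

definition in_ideal :: "el set \<Rightarrow> ncpoly \<Rightarrow> bool" where "in_ideal I a \<longleftrightarrow> coeffs a \<in> I"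

context
  fixes M :: nat and R :: "el set"
  assumes rel_Fr: "R \<subseteq> Fr M"
begin

lemma in_ideal_simps:
  "in_ideal (starIdeal M R) 0"
  "in_ideal (starIdeal M R) a \<Longrightarrow> in_ideal (starIdeal M R) b \<Longrightarrow> in_ideal (starIdeal M R) (a + b)"
  "in_ideal (starIdeal M R) a \<Longrightarrow> in_ideal (starIdeal M R) b \<Longrightarrow> in_ideal (starIdeal M R) (a - b)"
  "in_ideal (starIdeal M R) a \<Longrightarrow> in_ideal (starIdeal M R) (- a)"
  "in_Fr M x \<Longrightarrow> in_ideal (starIdeal M R) a \<Longrightarrow> in_ideal (starIdeal M R) (x * a)"
  "in_Fr M x \<Longrightarrow> in_ideal (starIdeal M R) a \<Longrightarrow> in_ideal (starIdeal M R) (a * x)"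
  "in_ideal (starIdeal M R) a \<Longrightarrow> in_ideal (starIdeal M R) (padj a)"
  by (auto simp: in_ideal_def in_Fr_def coeffs_0 coeffs_plus coeffs_minus coeffs_uminus coeffs_times padj_def
      intro: starIdeal.zero starIdeal.add starIdeal_fsub[OF rel_Fr] starIdeal.scale starIdeal.lmul starIdeal.rmul starIdeal.star)

lemma in_ideal_sum: "finite S \<Longrightarrow> (\<And>i. i \<in> S \<Longrightarrow> in_ideal (starIdeal M R) (F i)) \<Longrightarrow> in_ideal (starIdeal M R) (\<Sum>i\<in>S. F i)"
  by (induction S rule: finite_induct) (simp_all add: in_ideal_simps)

end

lemma padj_gen: "padj (gen b j k) = gen (\<not> b) j k"
  by (simp add: padj_def gen_def fstar_fgen)
lemma padj_scal: "padj (scal c) = scal (cnj c)"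
  by (simp add: padj_def scal_def fstar_fscale fstar_wrev fun_eq_iff fone_def wrev_def fscale_def)
lemma cnj_Jsign: "cnj (Jsign M j) = Jsign M j" by (simp add: Jsign_def)

lemma padj_J_rel: "padj (J_rel M j k) = gen True j k - gen False (Jperm M j) (Jperm M k) * scal (Jsign M j * Jsign M k)"
  by (simp add: J_rel_def padj_diff padj_mult padj_gen padj_scal cnj_Jsign)

lemma scal_left_commute: "x * (scal c * y) = scal c * (x * y)"
  by (metis scal_comm mult.assoc)

lemma scal_mult_mult: "(scal a * P) * (scal b * Q) = (scal a * scal b) * (P * Q)"
  by (metis scal_left_commute mult.assoc)

lemma scal_Jsign_cancel: "scal (Jsign M j * Jsign M l) * scal (Jsign M k * Jsign M l) = scal (Jsign M j * Jsign M k)"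
  by (simp add: scal_mult[symmetric]) (auto simp: Jsign_def)

lemma scal_Jsign_kron_Jperm:
  "j \<in> idx M \<Longrightarrow> k \<in> idx M \<Longrightarrow> scal (Jsign M j * Jsign M k) * kron (Jperm M j) (Jperm M k) = kron j k"
  by (auto simp: kron_def Jsign_def scal_mult[symmetric] dest: arg_cong[where f="Jperm M"] simp: Jperm_Jperm)

lemma gen_True_J_rel_expansion: "gen True j l = padj (J_rel M j l) + scal (Jsign M j * Jsign M l) * gen False (Jperm M j) (Jperm M l)"
  by (simp add: padj_J_rel scal_comm)
lemma gen_False_J_rel_expansion: "gen False k l = J_rel M k l + scal (Jsign M k * Jsign M l) * gen True (Jperm M k) (Jperm M l)"
  by (simp add: J_rel_def)

(* Substituting U = J Ubar J^-1 turns the unitarity relations of Ubar into those of U, up to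
   multiples of J_rel. *)
lemma row_rel_Ubar_eq:
  assumes j: "j \<in> idx M" and k: "k \<in> idx M"
  shows "row_rel M True False j k =
    (\<Sum>l\<in>idx M. padj (J_rel M j l) * gen False k l + (scal (Jsign M j * Jsign M l) * gen False (Jperm M j) (Jperm M l)) * J_rel M k l)
    + scal (Jsign M j * Jsign M k) * row_rel M False True (Jperm M j) (Jperm M k)"
proof -
  let ?c = "scal (Jsign M j * Jsign M k)"
  have summand: "gen True j l * gen False k l = padj (J_rel M j l) * gen False k l + (scal (Jsign M j * Jsign M l) * gen False (Jperm M j) (Jperm M l)) * J_rel M k l
      + ?c * (gen False (Jperm M j) (Jperm M l) * gen True (Jperm M k) (Jperm M l))" for l
  proof -
    have "gen True j l * gen False k l = padj (J_rel M j l) * gen False k l + (scal (Jsign M j * Jsign M l) * gen False (Jperm M j) (Jperm M l)) * gen False k l"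
      by (subst gen_True_J_rel_expansion) (simp add: distrib_right)
    also have "(scal (Jsign M j * Jsign M l) * gen False (Jperm M j) (Jperm M l)) * gen False k l =
       (scal (Jsign M j * Jsign M l) * gen False (Jperm M j) (Jperm M l)) * J_rel M k l +
       (scal (Jsign M j * Jsign M l) * gen False (Jperm M j) (Jperm M l)) * (scal (Jsign M k * Jsign M l) * gen True (Jperm M k) (Jperm M l))"
      by (subst gen_False_J_rel_expansion) (simp add: distrib_left)
    also have "(scal (Jsign M j * Jsign M l) * gen False (Jperm M j) (Jperm M l)) * (scal (Jsign M k * Jsign M l) * gen True (Jperm M k) (Jperm M l))
       = ?c * (gen False (Jperm M j) (Jperm M l) * gen True (Jperm M k) (Jperm M l))"
      by (simp only: scal_mult_mult scal_Jsign_cancel)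
    finally show ?thesis by (simp add: add.assoc)
  qed
  have reindex: "(\<Sum>l\<in>idx M. gen False (Jperm M j) (Jperm M l) * gen True (Jperm M k) (Jperm M l)) = (\<Sum>l\<in>idx M. gen False (Jperm M j) l * gen True (Jperm M k) l)"
    by (rule sum.reindex_bij_betw[OF Jperm_bij])
  show ?thesis
    unfolding row_rel_def[of M True False j k] row_rel_def[of M False True]
    by (simp add: summand sum.distrib sum_distrib_left[symmetric] reindex right_diff_distrib scal_Jsign_kron_Jperm[OF j k])
qed

lemma col_rel_Ubar_eq:
  assumes j: "j \<in> idx M" and k: "k \<in> idx M"
  shows "col_rel M False True j k =
    (\<Sum>l\<in>idx M. J_rel M l j * gen True l k + (scal (Jsign M l * Jsign M j) * gen True (Jperm M l) (Jperm M j)) * padj (J_rel M l k))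
    + scal (Jsign M j * Jsign M k) * col_rel M True False (Jperm M j) (Jperm M k)"
proof -
  let ?c = "scal (Jsign M j * Jsign M k)"
  have summand: "gen False l j * gen True l k = J_rel M l j * gen True l k + (scal (Jsign M l * Jsign M j) * gen True (Jperm M l) (Jperm M j)) * padj (J_rel M l k)
      + ?c * (gen True (Jperm M l) (Jperm M j) * gen False (Jperm M l) (Jperm M k))" for l
  proof -
    have "gen False l j * gen True l k = J_rel M l j * gen True l k + (scal (Jsign M l * Jsign M j) * gen True (Jperm M l) (Jperm M j)) * gen True l k"
      by (subst gen_False_J_rel_expansion) (simp add: distrib_right)
    also have "(scal (Jsign M l * Jsign M j) * gen True (Jperm M l) (Jperm M j)) * gen True l k =
       (scal (Jsign M l * Jsign M j) * gen True (Jperm M l) (Jperm M j)) * padj (J_rel M l k) +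
       (scal (Jsign M l * Jsign M j) * gen True (Jperm M l) (Jperm M j)) * (scal (Jsign M l * Jsign M k) * gen False (Jperm M l) (Jperm M k))"
      by (subst gen_True_J_rel_expansion) (simp add: distrib_left)
    also have "(scal (Jsign M l * Jsign M j) * gen True (Jperm M l) (Jperm M j)) * (scal (Jsign M l * Jsign M k) * gen False (Jperm M l) (Jperm M k))
       = ?c * (gen True (Jperm M l) (Jperm M j) * gen False (Jperm M l) (Jperm M k))"
      by (simp only: scal_mult_mult scal_mult[symmetric]) (auto simp: Jsign_def)
    finally show ?thesis by (simp add: add.assoc)
  qed
  have reindex: "(\<Sum>l\<in>idx M. gen True (Jperm M l) (Jperm M j) * gen False (Jperm M l) (Jperm M k)) = (\<Sum>l\<in>idx M. gen True l (Jperm M j) * gen False l (Jperm M k))"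
    by (rule sum.reindex_bij_betw[OF Jperm_bij])
  show ?thesis
    unfolding col_rel_def[of M False True j k] col_rel_def[of M True False]
    by (simp add: summand sum.distrib sum_distrib_left[symmetric] reindex right_diff_distrib scal_Jsign_kron_Jperm[OF j k])
qed

lemma IO_J_rel: "a \<in> idx M \<Longrightarrow> c \<in> idx M \<Longrightarrow> in_ideal (IO M) (J_rel M a c)"
  by (simp add: in_ideal_def IO_def relO_mem starIdeal.gen)
lemma IO_row_rel: "a \<in> idx M \<Longrightarrow> c \<in> idx M \<Longrightarrow> in_ideal (IO M) (row_rel M False True a c)"
  by (simp add: in_ideal_def IO_def relO_mem starIdeal.gen)
lemma IO_col_rel: "a \<in> idx M \<Longrightarrow> c \<in> idx M \<Longrightarrow> in_ideal (IO M) (col_rel M True False a c)"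
  by (simp add: in_ideal_def IO_def relO_mem starIdeal.gen)

lemmas IO_simps = in_ideal_simps[OF relO_Fr, folded IO_def] in_ideal_sum[OF relO_Fr, folded IO_def]

lemma IO_row_rel_Ubar: "j \<in> idx M \<Longrightarrow> k \<in> idx M \<Longrightarrow> in_ideal (IO M) (row_rel M True False j k)"
  by (simp add: row_rel_Ubar_eq IO_simps IO_J_rel IO_row_rel Jperm_idx)
lemma IO_col_rel_Ubar: "j \<in> idx M \<Longrightarrow> k \<in> idx M \<Longrightarrow> in_ideal (IO M) (col_rel M False True j k)"
  by (simp add: col_rel_Ubar_eq IO_simps IO_J_rel IO_col_rel Jperm_idx)

lemma starIdeal_sub: "a \<in> starIdeal M R \<Longrightarrow> R \<subseteq> starIdeal M R' \<Longrightarrow> a \<in> starIdeal M R'"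
  by (induction rule: starIdeal.induct)
     (auto intro: starIdeal.zero starIdeal.add starIdeal.scale starIdeal.lmul starIdeal.rmul starIdeal.star)

lemma IU_IO: "IU M \<subseteq> IO M"
proof -
  have "relU M \<subseteq> IO M"
  proof
    fix r assume "r \<in> relU M"
    from relU_cases[OF this] obtain j k where jk: "j \<in> idx M" "k \<in> idx M"
      "r = coeffs (row_rel M False True j k) \<or> r = coeffs (col_rel M True False j k) \<or> r = coeffs (row_rel M True False j k) \<or> r = coeffs (col_rel M False True j k)"
      by blast
    from jk(3) show "r \<in> IO M"
      using IO_row_rel[OF jk(1,2)] IO_col_rel[OF jk(1,2)] IO_row_rel_Ubar[OF jk(1,2)] IO_col_rel_Ubar[OF jk(1,2)]
      by (elim disjE) (simp_all add: in_ideal_def)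
  qed
  then show ?thesis unfolding IU_def using starIdeal_sub[of _ M "relU M" "relO M"] by (auto simp: IO_def)
qed

section \<open>The 2x2 matrix representation\<close>

(* A 2x2 matrix over el, its rows and columns indexed by False, True in this order. *)
type_synonym mat2 = "(bool \<times> bool) \<times> word \<Rightarrow> complex"

definition entry :: "mat2 \<Rightarrow> bool \<Rightarrow> bool \<Rightarrow> el" where "entry X r c = (\<lambda>w. X ((r,c),w))"

definition mat_mul :: "mat2 \<Rightarrow> mat2 \<Rightarrow> mat2" where
  "mat_mul X Y = (\<lambda>((r,c),w). \<Sum>k\<in>UNIV. fmul (entry X r k) (entry Y k c) w)"
definition mat_one :: mat2 where "mat_one = (\<lambda>((r,c),w). if r = c then fone w else 0)"
definition mat_adj :: "mat2 \<Rightarrow> mat2" where "mat_adj X = (\<lambda>((r,c),w). cnj (X ((c,r), wrev w)))"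

lemma entry_mat_mul: "entry (mat_mul X Y) r c = (\<lambda>w. \<Sum>k\<in>UNIV. fmul (entry X r k) (entry Y k c) w)"
  by (simp add: entry_def mat_mul_def)

lemma entry_mat_adj: "entry (mat_adj X) r c = fstar (entry X c r)"
  by (simp add: entry_def mat_adj_def fstar_wrev)

lemma mat2_eq: "X = Y \<longleftrightarrow> (\<forall>r c. entry X r c = entry Y r c)"
  by (auto simp: entry_def fun_eq_iff)

lemma fmul_plus_left: "fmul (\<lambda>v. a v + b v) g = (\<lambda>w. fmul a g w + fmul b g w)"
  using fmul_fadd_left[of a b g] by (simp add: fadd_def)
lemma fmul_plus_right: "fmul g (\<lambda>v. a v + b v) = (\<lambda>w. fmul g a w + fmul g b w)"
  using fmul_fadd_right[of g a b] by (simp add: fadd_def)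
lemma fmul_scale_left: "fmul (\<lambda>v. k * a v) g = (\<lambda>w. k * fmul a g w)"
  using fmul_fscale_left[of k a g] by (simp add: fscale_def)
lemma fmul_scale_right: "fmul g (\<lambda>v. k * a v) = (\<lambda>w. k * fmul g a w)"
  using fmul_fscale_right[of g k a] by (simp add: fscale_def)
lemma fmul_zero_left: "fmul (\<lambda>v. 0) g = (\<lambda>w. 0)"
  using fmul_scale_left[of 0 g g] by simp
lemma fmul_zero_right: "fmul g (\<lambda>v. 0) = (\<lambda>w. 0)"
  using fmul_scale_right[of g 0 g] by simp

lemma UNIV_bool_sum: "(\<Sum>k\<in>(UNIV::bool set). f k) = f False + f True"
  by (simp add: UNIV_bool)

lemma fmul_cnj_wrev: "cnj (fmul f g (rev (map flipl w))) = fmul (\<lambda>w. cnj (g (rev (map flipl w)))) (\<lambda>w. cnj (f (rev (map flipl w)))) w"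
  using fstar_fmul[of f g] unfolding fstar_def by (simp add: fun_eq_iff)

interpretation mat_alg: fun_star_algebra mat_mul mat_one mat_adj
proof
  fix a b c g :: mat2 and k :: complex
  show "mat_mul (mat_mul a b) c = mat_mul a (mat_mul b c)"
    unfolding mat2_eq entry_mat_mul
    by (simp add: UNIV_bool_sum fmul_plus_left fmul_plus_right fmul_assoc entry_def fun_eq_iff)
  show "mat_mul mat_one a = a"
    unfolding mat2_eq entry_mat_mul
    by (intro allI, case_tac r) (simp_all add: UNIV_bool_sum entry_def mat_one_def fmul_fone_left fmul_zero_left fone_indicator[symmetric])
  show "mat_mul a mat_one = a"
    unfolding mat2_eq entry_mat_mul
    by (intro allI, case_tac c) (simp_all add: UNIV_bool_sum entry_def mat_one_def fmul_fone_right fmul_zero_right fone_indicator[symmetric])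
  show "mat_mul (\<lambda>x. a x + b x) g = (\<lambda>x. mat_mul a g x + mat_mul b g x)"
    by (simp add: mat_mul_def entry_def fmul_plus_left fun_eq_iff split_beta sum.distrib)
  show "mat_mul (\<lambda>x. k * a x) g = (\<lambda>x. k * mat_mul a g x)"
    by (simp add: mat_mul_def entry_def fmul_scale_left fun_eq_iff split_beta sum_distrib_left)
  show "mat_mul g (\<lambda>x. a x + b x) = (\<lambda>x. mat_mul g a x + mat_mul g b x)"
    by (simp add: mat_mul_def entry_def fmul_plus_right fun_eq_iff split_beta sum.distrib)
  show "mat_mul g (\<lambda>x. k * a x) = (\<lambda>x. k * mat_mul g a x)"
    by (simp add: mat_mul_def entry_def fmul_scale_right fun_eq_iff split_beta sum_distrib_left)
  show "mat_adj (\<lambda>x. a x + b x) = (\<lambda>x. mat_adj a x + mat_adj b x)"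
    by (simp add: mat_adj_def fun_eq_iff split_beta)
  show "mat_adj (\<lambda>x. k * a x) = (\<lambda>x. cnj k * mat_adj a x)"
    by (simp add: mat_adj_def fun_eq_iff split_beta)
  show "mat_adj (mat_mul a b) = mat_mul (mat_adj b) (mat_adj a)"
    unfolding mat2_eq entry_mat_mul entry_mat_adj by (simp add: entry_mat_mul fstar_def fmul_cnj_wrev)
  show "mat_adj mat_one = mat_one"
    by (auto simp: mat_adj_def mat_one_def fun_eq_iff fone_def wrev_def)
qed

definition mat2_of :: "ncpoly \<Rightarrow> ncpoly \<Rightarrow> ncpoly \<Rightarrow> ncpoly \<Rightarrow> mat2" where
  "mat2_of A B C D = (\<lambda>((r,c),w). (if r then (if c then coeffs D else coeffs C) else (if c then coeffs B else coeffs A)) w)"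

lemma entry_mat2_of: "entry (mat2_of A B C D) r c = (if r then (if c then coeffs D else coeffs C) else (if c then coeffs B else coeffs A))"
  by (auto simp: entry_def mat2_of_def fun_eq_iff)

definition rep_letter :: "nat \<Rightarrow> letter \<Rightarrow> mat2" where
  "rep_letter M y = (case y of (j,k,b) \<Rightarrow>
     if b then mat2_of 0 (scal (Jsign M j * Jsign M k) * gen False (Jperm M j) (Jperm M k)) (gen True j k) 0
     else mat2_of 0 (gen False j k) (scal (Jsign M j * Jsign M k) * gen True (Jperm M j) (Jperm M k)) 0)"

lemma coeffs_padj: "coeffs (padj a) = fstar (coeffs a)" by (simp add: padj_def)

lemma mat_adj_mat2_of: "mat_adj (mat2_of A B C D) = mat2_of (padj A) (padj C) (padj B) (padj D)"
  unfolding mat2_eq entry_mat_adj entry_mat2_of by (simp add: coeffs_padj)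

lemma padj_0: "padj 0 = 0"
  by (simp add: padj_def zero_ncpoly_def fstar_wrev fzero_def)

lemma rep_letter_flip: "rep_letter M (flipl y) = mat_adj (rep_letter M y)"
proof -
  obtain j k b where y: "y = (j,k,b)" by (cases y)
  show ?thesis
    by (simp add: y rep_letter_def mat_adj_mat2_of padj_0 padj_mult padj_gen padj_scal cnj_Jsign scal_comm)
qed

definition rep :: "nat \<Rightarrow> ncpoly \<Rightarrow> bool \<Rightarrow> bool \<Rightarrow> ncpoly" where
  "rep M a r c = Poly (entry (mat_alg.lift (rep_letter M) (coeffs a)) r c)"

lemma entry_plus: "entry (\<lambda>x. X x + Y x) r c = fadd (entry X r c) (entry Y r c)"
  by (simp add: entry_def fadd_def)

lemma entry_neg: "entry (\<lambda>x. - X x) r c = fscale (-1) (entry X r c)"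
  by (simp add: entry_def fscale_def)

lemma in_Fr_finite_supp: "in_Fr M a \<Longrightarrow> finite (supp (coeffs a))" by (simp add: in_Fr_def Fr_finite_supp)

lemma rep_mult: "in_Fr M a \<Longrightarrow> in_Fr M b \<Longrightarrow> rep M (a * b) r c = rep M a r False * rep M b False c + rep M a r True * rep M b True c"
  by (simp add: rep_def coeffs_times mat_alg.lift_fmul in_Fr_finite_supp entry_mat_mul UNIV_bool_sum Poly_fmul[symmetric] Poly_fadd[symmetric] fadd_def)

lemma rep_add: "in_Fr M a \<Longrightarrow> in_Fr M b \<Longrightarrow> rep M (a + b) r c = rep M a r c + rep M b r c"
  by (simp add: rep_def coeffs_plus mat_alg.lift_fadd in_Fr_finite_supp entry_plus Poly_fadd)

lemma rep_uminus: "in_Fr M a \<Longrightarrow> rep M (- a) r c = - rep M a r c"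
  by (simp add: rep_def coeffs_uminus mat_alg.lift_fscale in_Fr_finite_supp entry_neg uminus_ncpoly_def)

lemma rep_diff: "in_Fr M a \<Longrightarrow> in_Fr M b \<Longrightarrow> rep M (a - b) r c = rep M a r c - rep M b r c"
proof -
  assume a: "in_Fr M a" "in_Fr M b"
  have "rep M (a + - b) r c = rep M a r c + rep M (- b) r c" by (rule rep_add) (simp_all add: a)
  also have "rep M (- b) r c = - rep M b r c" by (rule rep_uminus) (simp add: a)
  finally show ?thesis by simp
qed

lemma rep_1: "rep M 1 r c = (if r = c then 1 else 0)"
  by (simp add: rep_def coeffs_1 mat_alg.lift_fone entry_def) (auto simp: mat_one_def one_ncpoly_def zero_ncpoly_def fzero_def)

lemma rep_0: "rep M 0 r c = 0"
  by (simp add: rep_def coeffs_0 mat_alg.lift_fzero entry_def) (simp add: zero_ncpoly_def fzero_def)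

lemma rep_padj: "in_Fr M a \<Longrightarrow> rep M (padj a) r c = padj (rep M a c r)"
  by (simp add: rep_def coeffs_padj mat_alg.lift_fstar rep_letter_flip in_Fr_finite_supp entry_mat_adj padj_def)

lemma rep_gen: "rep M (gen b j k) r c = Poly (entry (rep_letter M (j,k,b)) r c)"
  by (simp add: rep_def gen_def mat_alg.lift_fgen)

lemma rep_sum: "finite S \<Longrightarrow> (\<And>i. i \<in> S \<Longrightarrow> in_Fr M (F i)) \<Longrightarrow> rep M (\<Sum>i\<in>S. F i) r c = (\<Sum>i\<in>S. rep M (F i) r c)"
proof (induction S rule: finite_induct)
  case empty then show ?case by (simp add: rep_0)
next
  case (insert i S) then show ?case by (simp add: rep_add)
qed

lemma rep_gen_False: "rep M (gen False j k) False False = 0" "rep M (gen False j k) False True = gen False j k"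
  "rep M (gen False j k) True False = scal (Jsign M j * Jsign M k) * gen True (Jperm M j) (Jperm M k)" "rep M (gen False j k) True True = 0"
  by (simp_all add: rep_gen rep_letter_def entry_mat2_of)
lemma rep_gen_True: "rep M (gen True j k) False False = 0" "rep M (gen True j k) True False = gen True j k"
  "rep M (gen True j k) False True = scal (Jsign M j * Jsign M k) * gen False (Jperm M j) (Jperm M k)" "rep M (gen True j k) True True = 0"
  by (simp_all add: rep_gen rep_letter_def entry_mat2_of)

definition Fr_entries :: "nat \<Rightarrow> mat2 \<Rightarrow> bool" where "Fr_entries M X \<longleftrightarrow> (\<forall>r c. entry X r c \<in> Fr M)"

lemma Fr_entries_mat_one: "Fr_entries M mat_one"
proof -
  have "entry mat_one r c = (if r = c then fone else fzero)" for r c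
    by (auto simp: entry_def mat_one_def fzero_def)
  then show ?thesis by (simp add: Fr_entries_def)
qed

lemma Fr_entries_mat_mul: "Fr_entries M X \<Longrightarrow> Fr_entries M Y \<Longrightarrow> Fr_entries M (mat_mul X Y)"
  by (simp add: Fr_entries_def entry_mat_mul UNIV_bool_sum fadd_def[symmetric])

lemma Fr_entries_rep_letter: "y \<in> letters M \<Longrightarrow> Fr_entries M (rep_letter M y)"
proof -
  assume y: "y \<in> letters M"
  obtain j k b where jkb: "y = (j,k,b)" by (cases y)
  have jk: "j \<in> idx M" "k \<in> idx M" using y by (auto simp: jkb letters_def idx_def)
  then show ?thesis
    by (auto simp: Fr_entries_def jkb rep_letter_def entry_mat2_of in_Fr_def[symmetric] Jperm_idx)
qed

lemma Fr_entries_word_eval: "set v \<subseteq> letters M \<Longrightarrow> Fr_entries M (mat_alg.word_eval (rep_letter M) v)"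
  by (induction v) (simp_all add: Fr_entries_mat_one Fr_entries_mat_mul Fr_entries_rep_letter)

lemma rep_in_Fr: "in_Fr M a \<Longrightarrow> in_Fr M (rep M a r c)"
proof -
  assume a: "in_Fr M a"
  have "entry (mat_alg.lift (rep_letter M) (coeffs a)) r c = fsumset (supp (coeffs a)) (\<lambda>v. fscale (coeffs a v) (entry (mat_alg.word_eval (rep_letter M) v) r c))"
    by (simp add: mat_alg.lift_def entry_def fsumset_def fscale_def)
  also have "\<dots> \<in> Fr M"
  proof (intro fsumset_Fr fscale_Fr)
    show "finite (supp (coeffs a))" using a by (simp add: in_Fr_finite_supp)
    fix v assume "v \<in> supp (coeffs a)"
    then have "set v \<subseteq> letters M" using a by (simp add: in_Fr_def Fr_iff)
    then show "entry (mat_alg.word_eval (rep_letter M) v) r c \<in> Fr M" using Fr_entries_word_eval[unfolded Fr_entries_def] by blast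
  qed
  finally show ?thesis by (simp add: in_Fr_def rep_def)
qed

lemma supp_fone: "finite (supp fone)" by (simp add: supp_def fone_def)

lemma rep_scal: "rep M (scal k) r c = (if r = c then scal k else 0)"
proof -
  have "rep M (scal k) r c = Poly (entry (\<lambda>x. k * mat_one x) r c)"
    by (simp add: rep_def scal_def mat_alg.lift_fscale[OF supp_fone] mat_alg.lift_fone)
  also have "\<dots> = (if r = c then scal k else 0)"
    by (auto simp: entry_def mat_one_def scal_def fscale_def zero_ncpoly_def fzero_def)
  finally show ?thesis .
qed

lemma rep_scal_mult: "in_Fr M a \<Longrightarrow> rep M (scal k * a) r c = scal k * rep M a r c"
  by (cases r) (simp_all add: rep_mult rep_scal)

lemma rep_kron: "rep M (kron j k) r c = (if r = c then kron j k else 0)"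
  by (simp add: kron_def rep_1 rep_0)

lemma sum_Jperm_row_rel:
  assumes j: "j \<in> idx M" and k: "k \<in> idx M"
  shows "(\<Sum>l\<in>idx M. (scal (Jsign M j * Jsign M l) * gen True (Jperm M j) (Jperm M l)) * (scal (Jsign M k * Jsign M l) * gen False (Jperm M k) (Jperm M l))) - kron j k
     = scal (Jsign M j * Jsign M k) * row_rel M True False (Jperm M j) (Jperm M k)"
proof -
  have reindex: "(\<Sum>l\<in>idx M. gen True (Jperm M j) (Jperm M l) * gen False (Jperm M k) (Jperm M l)) = (\<Sum>l\<in>idx M. gen True (Jperm M j) l * gen False (Jperm M k) l)"
    by (rule sum.reindex_bij_betw[OF Jperm_bij])
  show ?thesis
    unfolding row_rel_def by (simp only: scal_mult_mult scal_Jsign_cancel sum_distrib_left[symmetric] reindex right_diff_distrib scal_Jsign_kron_Jperm[OF j k])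
qed

lemma sum_Jperm_col_rel:
  assumes j: "j \<in> idx M" and k: "k \<in> idx M"
  shows "(\<Sum>l\<in>idx M. (scal (Jsign M l * Jsign M j) * gen False (Jperm M l) (Jperm M j)) * (scal (Jsign M l * Jsign M k) * gen True (Jperm M l) (Jperm M k))) - kron j k
     = scal (Jsign M j * Jsign M k) * col_rel M False True (Jperm M j) (Jperm M k)"
proof -
  have reindex: "(\<Sum>l\<in>idx M. gen False (Jperm M l) (Jperm M j) * gen True (Jperm M l) (Jperm M k)) = (\<Sum>l\<in>idx M. gen False l (Jperm M j) * gen True l (Jperm M k))"
    by (rule sum.reindex_bij_betw[OF Jperm_bij])
  have signs: "scal (Jsign M l * Jsign M j) * scal (Jsign M l * Jsign M k) = scal (Jsign M j * Jsign M k)" for l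
    by (simp add: scal_mult[symmetric]) (auto simp: Jsign_def)
  show ?thesis
    unfolding col_rel_def by (simp only: scal_mult_mult signs sum_distrib_left[symmetric] reindex right_diff_distrib scal_Jsign_kron_Jperm[OF j k])
qed

lemma IU_unitarity_rels: "a \<in> idx M \<Longrightarrow> c \<in> idx M \<Longrightarrow>
  in_ideal (IU M) (row_rel M False True a c) \<and> in_ideal (IU M) (col_rel M True False a c) \<and>
  in_ideal (IU M) (row_rel M True False a c) \<and> in_ideal (IU M) (col_rel M False True a c)"
  by (simp add: in_ideal_def IU_def relU_mem starIdeal.gen)

lemmas IU_simps = in_ideal_simps[OF relU_Fr, folded IU_def] in_ideal_sum[OF relU_Fr, folded IU_def]

lemma rep_row_rel:
  assumes j: "j \<in> idx M" and k: "k \<in> idx M"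
  shows "in_ideal (IU M) (rep M (row_rel M False True j k) r c)"
proof -
  have expand: "rep M (row_rel M False True j k) r c = (\<Sum>l\<in>idx M. rep M (gen False j l * gen True k l) r c) - (if r = c then kron j k else 0)" for r c
    unfolding row_rel_def using j k by (simp add: rep_diff rep_sum rep_kron)
  show ?thesis
  proof (cases r; cases c)
    assume "\<not> r" "\<not> c"
    have "rep M (row_rel M False True j k) False False = row_rel M False True j k"
      using j k by (simp add: expand rep_mult rep_gen_False rep_gen_True) (simp add: row_rel_def)
    then show ?thesis using \<open>\<not> r\<close> \<open>\<not> c\<close> IU_unitarity_rels[OF j k] by simp
  next
    assume "\<not> r" "c"
    then show ?thesis using j k by (simp add: expand rep_mult rep_gen_False rep_gen_True IU_simps)
  next
    assume "r" "\<not> c"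
    then show ?thesis using j k by (simp add: expand rep_mult rep_gen_False rep_gen_True IU_simps)
  next
    assume "r" "c"
    then show ?thesis using j k IU_unitarity_rels[OF Jperm_idx[OF j] Jperm_idx[OF k]]
      by (simp add: expand rep_mult rep_gen_False rep_gen_True Jperm_idx sum_Jperm_row_rel IU_simps)
  qed
qed

lemma rep_col_rel:
  assumes j: "j \<in> idx M" and k: "k \<in> idx M"
  shows "in_ideal (IU M) (rep M (col_rel M True False j k) r c)"
proof -
  have expand: "rep M (col_rel M True False j k) r c = (\<Sum>l\<in>idx M. rep M (gen True l j * gen False l k) r c) - (if r = c then kron j k else 0)" for r c
    unfolding col_rel_def using j k by (simp add: rep_diff rep_sum rep_kron)
  show ?thesis
  proof (cases r; cases c)
    assume "\<not> r" "\<not> c"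
    then show ?thesis using j k IU_unitarity_rels[OF Jperm_idx[OF j] Jperm_idx[OF k]]
      by (simp add: expand rep_mult rep_gen_False rep_gen_True Jperm_idx sum_Jperm_col_rel IU_simps)
  next
    assume "\<not> r" "c"
    then show ?thesis using j k by (simp add: expand rep_mult rep_gen_False rep_gen_True IU_simps)
  next
    assume "r" "\<not> c"
    then show ?thesis using j k by (simp add: expand rep_mult rep_gen_False rep_gen_True IU_simps)
  next
    assume "r" "c"
    have "rep M (col_rel M True False j k) True True = col_rel M True False j k"
      using j k by (simp add: expand rep_mult rep_gen_False rep_gen_True) (simp add: col_rel_def)
    then show ?thesis using \<open>r\<close> \<open>c\<close> IU_unitarity_rels[OF j k] by simp
  qed
qed

lemma rep_J_rel:
  assumes j: "j \<in> idx M" and k: "k \<in> idx M"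
  shows "rep M (J_rel M j k) r c = 0"
proof -
  have Jsign_Jperm: "Jsign M (Jperm M j) * Jsign M (Jperm M k) = Jsign M j * Jsign M k"
    using j k by (auto simp: Jsign_def Jperm_def idx_def)
  have sign_square: "scal (Jsign M j * Jsign M k) * scal (Jsign M j * Jsign M k) = 1"
    by (simp add: scal_mult[symmetric]) (auto simp: Jsign_def)
  have expand: "rep M (J_rel M j k) r c = rep M (gen False j k) r c - scal (Jsign M j * Jsign M k) * rep M (gen True (Jperm M j) (Jperm M k)) r c" for r c
    unfolding J_rel_def using j k by (simp add: rep_diff rep_scal_mult Jperm_idx)
  show ?thesis
    using j k by (cases r; cases c) (simp_all add: expand rep_gen_False rep_gen_True Jperm_Jperm Jsign_Jperm mult.assoc[symmetric] sign_square)
qed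

lemma rep_IO_in_IU:
  "e \<in> IO M \<Longrightarrow> in_ideal (IU M) (rep M (Poly e) r c)"
  unfolding IO_def
proof (induction arbitrary: r c rule: starIdeal.induct)
  case (gen e)
  from relO_cases[OF gen] obtain j k where jk: "j \<in> idx M" "k \<in> idx M"
    "e = coeffs (row_rel M False True j k) \<or> e = coeffs (col_rel M True False j k) \<or> e = coeffs (J_rel M j k)"
    by blast
  from jk(3) show ?case
    by (elim disjE) (simp_all add: rep_row_rel rep_col_rel rep_J_rel jk(1,2) IU_simps)
next
  case zero then show ?case by (simp add: Poly_fzero rep_0 IU_simps)
next
  case (add a b) then show ?case
    using starIdeal_Fr[OF relO_Fr] by (simp add: Poly_fadd rep_add in_Fr_def IU_simps)
next
  case (scale a k)
  have "in_Fr M (Poly a)" using scale starIdeal_Fr[OF relO_Fr] by (simp add: in_Fr_def)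
  then show ?case using scale by (simp add: Poly_fscale rep_scal_mult IU_simps)
next
  case (lmul x a) then show ?case
    using starIdeal_Fr[OF relO_Fr] by (simp add: Poly_fmul rep_mult in_Fr_def IU_simps rep_in_Fr[unfolded in_Fr_def])
next
  case (rmul a x) then show ?case
    using starIdeal_Fr[OF relO_Fr] by (simp add: Poly_fmul rep_mult in_Fr_def IU_simps rep_in_Fr[unfolded in_Fr_def])
next
  case (star a)
  have a: "in_Fr M (Poly a)" using star starIdeal_Fr[OF relO_Fr] by (simp add: in_Fr_def)
  have "Poly (fstar a) = padj (Poly a)" by (simp add: padj_def)
  then show ?case using star a by (simp add: rep_padj IU_simps)
qed

lemma rep_evens:
  "p \<in> evens M \<Longrightarrow> rep M (Poly p) False True = 0 \<and> rep M (Poly p) True False = 0 \<and> rep M (Poly p) True True = Poly p"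
proof (induction rule: evens.induct)
  case one then show ?case by (simp add: Poly_fone rep_1)
next
  case (gen j k l m)
  have "Poly (fmul (us j k) (u l m)) = gen True j k * gen False l m" by (simp add: Poly_fmul Poly_u Poly_us)
  then show ?case using gen by (simp add: rep_mult rep_gen_False rep_gen_True)
next
  case (add p q) then show ?case
    using evens_Fr[OF add.hyps(1)] evens_Fr[OF add.hyps(2)] by (simp add: Poly_fadd rep_add in_Fr_def)
next
  case (scale p k) then show ?case
    using evens_Fr[OF scale.hyps(1)] by (simp add: Poly_fscale rep_scal_mult in_Fr_def)
next
  case (mul p q) then show ?case
    using evens_Fr[OF mul.hyps(1)] evens_Fr[OF mul.hyps(2)] by (simp add: Poly_fmul rep_mult in_Fr_def)
next
  case (star p)
  have "Poly (fstar p) = padj (Poly p)" by (simp add: padj_def)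
  then show ?case using star evens_Fr[OF star.hyps(1)] by (simp add: rep_padj in_Fr_def padj_0)
qed

lemma evens_IO_imp_IU:
  assumes p: "p \<in> evens M" and q: "q \<in> evens M" and pq: "fsub p q \<in> IO M"
  shows "fsub p q \<in> IU M"
proof -
  have "in_ideal (IU M) (rep M (Poly (fsub p q)) True True)" by (rule rep_IO_in_IU[OF pq])
  moreover have "rep M (Poly (fsub p q)) True True = Poly (fsub p q)"
    using rep_evens[OF p] rep_evens[OF q] evens_Fr[OF p] evens_Fr[OF q]
    by (simp add: Poly_fsub rep_diff in_Fr_def)
  ultimately show ?thesis by (simp add: in_ideal_def)
qed

section \<open>Comultiplication of even elements\<close>

lemma tlist_Nil: "tlist [] = (\<lambda>x. 0)" by (simp add: tlist_def)
lemma tlist_Cons: "tlist (p # ps) = tadd (ftens (fst p) (snd p)) (tlist ps)"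
  by (simp add: tlist_def tadd_def)
lemma tlist_append: "tlist (ps @ qs) = tadd (tlist ps) (tlist qs)"
  by (simp add: tlist_def tadd_def)

lemma tmul_ftens_tlist: "tmul (ftens a b) (tlist qs) = tlist (map (\<lambda>cd. (fmul a (fst cd), fmul b (snd cd))) qs)"
  by (induction qs) (simp_all add: tlist_Nil tlist_Cons tensor_alg.mul_zero_right tadd_def tensor_alg.mul_add_right ftens_tmul)

lemma tmul_tlist: "tmul (tlist ps) (tlist qs) =
   tlist (concat (map (\<lambda>ab. map (\<lambda>cd. (fmul (fst ab) (fst cd), fmul (snd ab) (snd cd))) qs) ps))"
  by (induction ps) (simp_all add: tlist_Nil tlist_Cons tensor_alg.mul_zero_left tadd_def tensor_alg.mul_add_left tmul_ftens_tlist tlist_append)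

lemma tscale_tlist: "tscale c (tlist ps) = tlist (map (\<lambda>ab. (fscale c (fst ab), snd ab)) ps)"
  by (induction ps) (simp_all add: tlist_Nil tlist_Cons tscale_def tadd_def ftens_def fscale_def distrib_left mult.assoc split_beta fun_eq_iff)

lemma tstar_tlist: "tstar (tlist ps) = tlist (map (\<lambda>ab. (fstar (fst ab), fstar (snd ab))) ps)"
  by (induction ps) (simp_all add: tlist_Nil tlist_Cons tensor_alg.adj_zero tadd_def tensor_alg.adj_add tstar_ftens)

definition even_tensors :: "nat \<Rightarrow> tel set" where
  "even_tensors M = {t. \<exists>ps. (\<forall>i<length ps. fst (ps!i) \<in> evens M \<and> snd (ps!i) \<in> evens M) \<and> t = tlist ps}"

lemma even_tensors_iff: "t \<in> even_tensors M \<longleftrightarrow> (\<exists>ps. (\<forall>ab\<in>set ps. fst ab \<in> evens M \<and> snd ab \<in> evens M) \<and> t = tlist ps)"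
  by (simp add: even_tensors_def all_set_conv_all_nth)

lemma even_tensors_zero: "(\<lambda>x. 0) \<in> even_tensors M"
  unfolding even_tensors_iff by (rule exI[of _ "[]"]) (simp add: tlist_Nil)

lemma even_tensors_tensor: "p \<in> evens M \<Longrightarrow> q \<in> evens M \<Longrightarrow> ftens p q \<in> even_tensors M"
  unfolding even_tensors_iff by (rule exI[of _ "[(p,q)]"]) (simp add: tlist_Cons tlist_Nil tadd_def)

lemma even_tensors_add: "s \<in> even_tensors M \<Longrightarrow> t \<in> even_tensors M \<Longrightarrow> tadd s t \<in> even_tensors M"
proof -
  assume "s \<in> even_tensors M" "t \<in> even_tensors M"
  then obtain ps qs where "\<forall>ab\<in>set ps. fst ab \<in> evens M \<and> snd ab \<in> evens M" "s = tlist ps"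
    "\<forall>ab\<in>set qs. fst ab \<in> evens M \<and> snd ab \<in> evens M" "t = tlist qs" by (auto simp: even_tensors_iff)
  then show ?thesis unfolding even_tensors_iff by (intro exI[of _ "ps @ qs"]) (auto simp: tlist_append)
qed

lemma even_tensors_scale: "s \<in> even_tensors M \<Longrightarrow> tscale c s \<in> even_tensors M"
proof -
  assume "s \<in> even_tensors M"
  then obtain ps where "\<forall>ab\<in>set ps. fst ab \<in> evens M \<and> snd ab \<in> evens M" "s = tlist ps"
    by (auto simp: even_tensors_iff)
  then show ?thesis unfolding even_tensors_iff
    by (intro exI[of _ "map (\<lambda>ab. (fscale c (fst ab), snd ab)) ps"]) (auto simp: tscale_tlist intro: evens.scale)
qed

lemma even_tensors_star: "s \<in> even_tensors M \<Longrightarrow> tstar s \<in> even_tensors M"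
proof -
  assume "s \<in> even_tensors M"
  then obtain ps where "\<forall>ab\<in>set ps. fst ab \<in> evens M \<and> snd ab \<in> evens M" "s = tlist ps"
    by (auto simp: even_tensors_iff)
  then show ?thesis unfolding even_tensors_iff
    by (intro exI[of _ "map (\<lambda>ab. (fstar (fst ab), fstar (snd ab))) ps"]) (auto simp: tstar_tlist intro: evens.star)
qed

lemma even_tensors_mul: "s \<in> even_tensors M \<Longrightarrow> t \<in> even_tensors M \<Longrightarrow> tmul s t \<in> even_tensors M"
proof -
  assume "s \<in> even_tensors M" "t \<in> even_tensors M"
  then obtain ps qs where "\<forall>ab\<in>set ps. fst ab \<in> evens M \<and> snd ab \<in> evens M" "s = tlist ps"
    "\<forall>ab\<in>set qs. fst ab \<in> evens M \<and> snd ab \<in> evens M" "t = tlist qs" by (auto simp: even_tensors_iff)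
  then show ?thesis unfolding even_tensors_iff
    by (intro exI[of _ "concat (map (\<lambda>ab. map (\<lambda>cd. (fmul (fst ab) (fst cd), fmul (snd ab) (snd cd))) qs) ps)"])
       (auto simp: tmul_tlist intro: evens.mul)
qed

lemma even_tensors_sum: "finite S \<Longrightarrow> (\<And>i. i \<in> S \<Longrightarrow> F i \<in> even_tensors M) \<Longrightarrow> (\<lambda>x. \<Sum>i\<in>S. F i x) \<in> even_tensors M"
proof (induction S rule: finite_induct)
  case empty then show ?case by (simp add: even_tensors_zero)
next
  case (insert i S)
  have "(\<lambda>x. \<Sum>i\<in>insert i S. F i x) = tadd (F i) (\<lambda>x. \<Sum>i\<in>S. F i x)"
    using insert by (simp add: tadd_def)
  then show ?case using insert by (simp add: even_tensors_add)
qed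

lemma tcoeffs_sum: "tcoeffs (\<Sum>i\<in>S. F i) = (\<lambda>x. \<Sum>i\<in>S. tcoeffs (F i) x)"
  by (induction S rule: infinite_finite_induct) (simp_all add: tcoeffs_0 tcoeffs_plus tadd_def)

lemma fDelta_us_u_even_tensors:
  assumes "j \<in> idx M" "k \<in> idx M" "l \<in> idx M" "m \<in> idx M"
  shows "fDelta M (fmul (us j k) (u l m)) \<in> even_tensors M"
proof -
  have "Delta M (gen True j k * gen False l m) = (\<Sum>a\<in>idx M. \<Sum>b\<in>idx M. tensor (gen True j a * gen False l b) (gen True a k * gen False b m))"
    using assms by (simp add: Delta_mult in_Fr_def[symmetric] Delta_gen sum_distrib_left sum_distrib_right tensor_mult) (rule sum.swap)
  then have "tcoeffs (Delta M (gen True j k * gen False l m)) = tcoeffs (\<Sum>a\<in>idx M. \<Sum>b\<in>idx M. tensor (gen True j a * gen False l b) (gen True a k * gen False b m))"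
    by simp
  moreover have "tcoeffs (Delta M (gen True j k * gen False l m)) = fDelta M (fmul (us j k) (u l m))"
    by (simp add: Delta_def gen_def coeffs_times us_def u_def)
  moreover have "tcoeffs (\<Sum>a\<in>idx M. \<Sum>b\<in>idx M. tensor (gen True j a * gen False l b) (gen True a k * gen False b m))
      = (\<lambda>x. \<Sum>a\<in>idx M. \<Sum>b\<in>idx M. ftens (fmul (us j a) (u l b)) (fmul (us a k) (u b m)) x)"
    by (simp add: tcoeffs_sum tensor_def gen_def coeffs_times us_def u_def)
  ultimately have "fDelta M (fmul (us j k) (u l m)) = (\<lambda>x. \<Sum>a\<in>idx M. \<Sum>b\<in>idx M. ftens (fmul (us j a) (u l b)) (fmul (us a k) (u b m)) x)"
    by simp
  also have "\<dots> \<in> even_tensors M"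
    using assms by (intro even_tensors_sum even_tensors_tensor evens.gen) auto
  finally show ?thesis .
qed

lemma fDelta_evens: "p \<in> evens M \<Longrightarrow> fDelta M p \<in> even_tensors M"
proof (induction rule: evens.induct)
  case one then show ?case by (simp add: fDelta_fone even_tensors_tensor evens.one)
next
  case (gen j k l m) then show ?case by (rule fDelta_us_u_even_tensors)
next
  case (add p q) then show ?case by (simp add: fDelta_fadd evens_Fr even_tensors_add)
next
  case (scale p c) then show ?case by (simp add: fDelta_fscale evens_Fr even_tensors_scale)
next
  case (mul p q) then show ?case by (simp add: fDelta_fmul evens_Fr even_tensors_mul)
next
  case (star p) then show ?case by (simp add: fDelta_fstar evens_Fr even_tensors_star)
qed

definition canon :: "nat \<Rightarrow> el set \<Rightarrow> el set" where "canon M X = (\<Union>p\<in>X. cls M (IO M) p)"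

lemma A'_eq_cls_evens: "A' M = cls M (IU M) ` evens M"
  unfolding A'_def IU_def by (rule subalgS_eq_cls_evens[OF relU_Fr])
lemma B'_eq_cls_evens: "B' M = cls M (IO M) ` evens M"
  unfolding B'_def IO_def by (rule subalgS_eq_cls_evens[OF relO_Fr])

lemma cls_IU_self: "p \<in> Fr M \<Longrightarrow> p \<in> cls M (IU M) p"
  unfolding IU_def by (rule cls_self[OF relU_Fr])

lemma cls_IO_eq_iff: "p \<in> Fr M \<Longrightarrow> q \<in> Fr M \<Longrightarrow> cls M (IO M) p = cls M (IO M) q \<longleftrightarrow> fsub p q \<in> IO M"
  unfolding IO_def by (rule cls_eq_iff[OF relO_Fr])
lemma cls_IU_eq_iff: "p \<in> Fr M \<Longrightarrow> q \<in> Fr M \<Longrightarrow> cls M (IU M) p = cls M (IU M) q \<longleftrightarrow> fsub p q \<in> IU M"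
  unfolding IU_def by (rule cls_eq_iff[OF relU_Fr])

lemma canon_cls: "p \<in> Fr M \<Longrightarrow> canon M (cls M (IU M) p) = cls M (IO M) p"
proof -
  assume p: "p \<in> Fr M"
  have "cls M (IO M) q = cls M (IO M) p" if "q \<in> cls M (IU M) p" for q
  proof -
    have q: "q \<in> Fr M" "fsub p q \<in> IU M" using that by (auto simp: cls_def)
    have "fsub q p \<in> IO M" using IU_IO q(2) starIdeal.scale[of "fsub p q" M "relO M" "-1"]
      by (auto simp: IO_def fsub_def fscale_def)
    then show ?thesis using cls_IO_eq_iff[OF q(1) p] by simp
  qed
  then have "canon M (cls M (IU M) p) = (\<Union>q\<in>cls M (IU M) p. cls M (IO M) p)"
    unfolding canon_def by (rule SUP_cong[OF refl])
  then show ?thesis using cls_IU_self[OF p] by auto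
qed

lemma cls_IU_ops: 
  "p \<in> Fr M \<Longrightarrow> q \<in> Fr M \<Longrightarrow> qadd M (IU M) (cls M (IU M) p) (cls M (IU M) q) = cls M (IU M) (fadd p q)"
  "p \<in> Fr M \<Longrightarrow> q \<in> Fr M \<Longrightarrow> qmul M (IU M) (cls M (IU M) p) (cls M (IU M) q) = cls M (IU M) (fmul p q)"
  "p \<in> Fr M \<Longrightarrow> qscale M (IU M) c (cls M (IU M) p) = cls M (IU M) (fscale c p)"
  "p \<in> Fr M \<Longrightarrow> qstar M (IU M) (cls M (IU M) p) = cls M (IU M) (fstar p)"
  unfolding IU_def
  by (rule qadd_cls[OF relU_Fr], assumption+, rule qmul_cls[OF relU_Fr], assumption+,
      rule qscale_cls[OF relU_Fr], assumption, rule qstar_cls[OF relU_Fr], assumption)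

lemma cls_IO_ops:
  "p \<in> Fr M \<Longrightarrow> q \<in> Fr M \<Longrightarrow> qadd M (IO M) (cls M (IO M) p) (cls M (IO M) q) = cls M (IO M) (fadd p q)"
  "p \<in> Fr M \<Longrightarrow> q \<in> Fr M \<Longrightarrow> qmul M (IO M) (cls M (IO M) p) (cls M (IO M) q) = cls M (IO M) (fmul p q)"
  "p \<in> Fr M \<Longrightarrow> qscale M (IO M) c (cls M (IO M) p) = cls M (IO M) (fscale c p)"
  "p \<in> Fr M \<Longrightarrow> qstar M (IO M) (cls M (IO M) p) = cls M (IO M) (fstar p)"
  unfolding IO_def
  by (rule qadd_cls[OF relO_Fr], assumption+, rule qmul_cls[OF relO_Fr], assumption+,
      rule qscale_cls[OF relO_Fr], assumption, rule qstar_cls[OF relO_Fr], assumption)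

lemma qDelta_IU_cls: "p \<in> Fr M \<Longrightarrow> qDelta M (IU M) (cls M (IU M) p) = tcls M (IU M) (fDelta M p)"
  unfolding IU_def by (rule qDelta_cls[OF relU_Fr]) (simp_all add: Delta_relU[unfolded IU_def])
lemma qDelta_IO_cls: "p \<in> Fr M \<Longrightarrow> qDelta M (IO M) (cls M (IO M) p) = tcls M (IO M) (fDelta M p)"
  unfolding IO_def by (rule qDelta_cls[OF relO_Fr]) (simp_all add: Delta_relO[unfolded IO_def])

lemma canon_bij: "bij_betw (canon M) (A' M) (B' M)"
proof (rule bij_betwI')
  fix X Y assume "X \<in> A' M" "Y \<in> A' M"
  then obtain p q where p: "p \<in> evens M" "X = cls M (IU M) p" and q: "q \<in> evens M" "Y = cls M (IU M) q"
    by (auto simp: A'_eq_cls_evens)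
  show "(canon M X = canon M Y) = (X = Y)"
    using p q evens_Fr[OF p(1)] evens_Fr[OF q(1)] evens_IO_imp_IU[OF p(1) q(1)] IU_IO[of M]
    by (auto simp: canon_cls cls_IO_eq_iff cls_IU_eq_iff)
next
  fix X assume "X \<in> A' M"
  then obtain p where p: "p \<in> evens M" "X = cls M (IU M) p" by (auto simp: A'_eq_cls_evens)
  then show "canon M X \<in> B' M" using evens_Fr[OF p(1)] by (simp add: canon_cls B'_eq_cls_evens)
next
  fix Y assume "Y \<in> B' M"
  then obtain p where p: "p \<in> evens M" "Y = cls M (IO M) p" by (auto simp: B'_eq_cls_evens)
  then have "Y = canon M (cls M (IU M) p)" and "cls M (IU M) p \<in> A' M"
    using evens_Fr[OF p(1)] by (simp_all add: canon_cls A'_eq_cls_evens)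
  then show "\<exists>X\<in>A' M. Y = canon M X" by blast
qed

lemma A'_elim:
  assumes "X \<in> A' M"
  obtains p where "p \<in> evens M" "p \<in> Fr M" "X = cls M (IU M) p"
  using assms evens_Fr by (auto simp: A'_eq_cls_evens)

lemma canon_qone: "canon M (qone M (IU M)) = qone M (IO M)"
  by (simp add: qone_def canon_cls)

lemma canon_qadd_qmul:
  assumes X: "X \<in> A' M" and Y: "Y \<in> A' M"
  shows "canon M (qadd M (IU M) X Y) = qadd M (IO M) (canon M X) (canon M Y)"
    and "canon M (qmul M (IU M) X Y) = qmul M (IO M) (canon M X) (canon M Y)"
proof -
  obtain p where "p \<in> Fr M" "X = cls M (IU M) p" using X by (rule A'_elim)
  moreover obtain q where "q \<in> Fr M" "Y = cls M (IU M) q" using Y by (rule A'_elim)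
  ultimately show "canon M (qadd M (IU M) X Y) = qadd M (IO M) (canon M X) (canon M Y)"
    and "canon M (qmul M (IU M) X Y) = qmul M (IO M) (canon M X) (canon M Y)"
    by (simp_all add: cls_IU_ops cls_IO_ops canon_cls)
qed

lemma canon_qscale_qstar:
  assumes X: "X \<in> A' M"
  shows "canon M (qscale M (IU M) c X) = qscale M (IO M) c (canon M X)"
    and "canon M (qstar M (IU M) X) = qstar M (IO M) (canon M X)"
proof -
  obtain p where "p \<in> Fr M" "X = cls M (IU M) p" using X by (rule A'_elim)
  then show "canon M (qscale M (IU M) c X) = qscale M (IO M) c (canon M X)"
    and "canon M (qstar M (IU M) X) = qstar M (IO M) (canon M X)"
    by (simp_all add: cls_IU_ops cls_IO_ops canon_cls)
qed

lemma canon_qDelta: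
  assumes X: "X \<in> A' M"
  shows "\<exists>ps ps' :: (el \<times> el) list. length ps' = length ps
        \<and> (\<forall>i<length ps. cls M (IU M) (fst (ps!i)) \<in> A' M \<and> cls M (IU M) (snd (ps!i)) \<in> A' M
              \<and> cls M (IO M) (fst (ps'!i)) = canon M (cls M (IU M) (fst (ps!i)))
              \<and> cls M (IO M) (snd (ps'!i)) = canon M (cls M (IU M) (snd (ps!i))))
        \<and> qDelta M (IU M) X = tcls M (IU M) (tlist ps)
        \<and> qDelta M (IO M) (canon M X) = tcls M (IO M) (tlist ps')"
proof -
  obtain p where p: "p \<in> evens M" "p \<in> Fr M" "X = cls M (IU M) p" using X by (rule A'_elim)
  obtain ps where ps: "\<forall>i<length ps. fst (ps!i) \<in> evens M \<and> snd (ps!i) \<in> evens M" "fDelta M p = tlist ps"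
    using fDelta_evens[OF p(1)] by (auto simp: even_tensors_def)
  have "\<forall>i<length ps. cls M (IU M) (fst (ps!i)) \<in> A' M \<and> cls M (IU M) (snd (ps!i)) \<in> A' M
              \<and> cls M (IO M) (fst (ps!i)) = canon M (cls M (IU M) (fst (ps!i)))
              \<and> cls M (IO M) (snd (ps!i)) = canon M (cls M (IU M) (snd (ps!i)))"
    using ps(1) by (auto simp: A'_eq_cls_evens canon_cls evens_Fr)
  moreover have "qDelta M (IU M) X = tcls M (IU M) (tlist ps)"
    and "qDelta M (IO M) (canon M X) = tcls M (IO M) (tlist ps)"
    using p ps(2) by (simp_all add: qDelta_IU_cls qDelta_IO_cls canon_cls)
  ultimately show ?thesis by blast
qed

lemma canon_cqg_iso: "cqg_iso M (IU M) (A' M) (IO M) (B' M) (canon M)"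
  unfolding cqg_iso_def
  by (simp add: canon_bij canon_qone canon_qadd_qmul canon_qscale_qstar canon_qDelta)

lemma canon_gen_values: "gen_values M (canon M)"
  unfolding gen_values_def by (auto simp: canon_cls)

lemma cqg_iso_gen_values_unique:
  assumes iso: "cqg_iso M (IU M) (A' M) (IO M) (B' M) \<psi>" and gv: "gen_values M \<psi>"
    and X: "X \<in> A' M"
  shows "\<psi> X = canon M X"
  using X unfolding A'_def
proof (induction rule: subalgS.induct)
  case (gen j k l m)
  then show ?case using gv canon_gen_values[of M] by (simp add: gen_values_def)
qed (use iso canon_cqg_iso[of M] in \<open>simp_all add: cqg_iso_def A'_def\<close>)

theorem mainTheorem5:
  fixes M :: nat
  assumes "M \<ge> 1"
  shows "\<exists>\<phi>. cqg_iso M (IU M) (A' M) (IO M) (B' M) \<phi> \<and> gen_values M \<phi>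
            \<and> (\<forall>\<psi>. cqg_iso M (IU M) (A' M) (IO M) (B' M) \<psi> \<and> gen_values M \<psi>
                     \<longrightarrow> (\<forall>X\<in>A' M. \<psi> X = \<phi> X))"
  using canon_cqg_iso canon_gen_values cqg_iso_gen_values_unique by blast

end
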